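(* Assume the standing setting below. If $P_1,P_2\in C([0,T];\mathbb{R}^{n\times n})$ are both solutions of the equilibrium Riccati equation defined below, then $P_1(t)=P_2(t)$ for all $t\in[0,T]$.
   Context: Standing setting. Fix $T>0$ and integers $n,m\ge1$. Let $A\in L^1((0,T);\mathbb{R}^{n\times n})$, $B\in L^2((0,T);\mathbb{R}^{n\times m})$, $b\in L^1((0,T);\mathbb{R}^n)$. Let $M\in C([0,T]^2;\mathbb{R}^{m\times m})$ take positive definite symmetric values; $Q\in C([0,T]^2;\mathbb{R}^{n\times n})$ and $G\in C^1([0,T];\mathbb{R}^{n\times n})$ take positive semidefinite symmetric values; $S\in C([0,T]^2;\mathbb{R}^{m\times n})$; $q\in C([0,T]^2;\mathbb{R}^n)$, $\rho\in C([0,T]^2;\mathbb{R}^m)$, $g\in C^1([0,T];\mathbb{R}^n)$. The functions $Q,S,M,q,\rho$ are continuously differentiable in their first variable, with these partial derivatives denoted $Q_t,S_t,M_t,q_t,\rho_t$; $\dot G$ is the derivative of $G$. Let $E(s,t)=\exp\big(\int_t^sA(\tau)d\tau\big)$. Equilibrium Riccati equation. For $P\in C([0,T];\mathbb{R}^{n\times n})$ set $\Gamma(t)=M^{-1}(t,t)\big(B^\top(t)P(t)+S(t,t)\big)$, $\mathbb{E}(s,t)=\exp\Big(\int_t^s\big(A(\tau)-B(\tau)\Gamma(\tau)\big)d\tau\Big)$, and $$\mathbb{Q}(t)=\mathbb{E}^\top(T,t)\dot G(t)\mathbb{E}(T,t)+\int_t^T\mathbb{E}^\top(s,t)\big[Q_t(t,s)-\Gamma^\top(s)S_t(t,s)-S_t^\top(t,s)\Gamma(s)+\Gamma^\top(s)M_t(t,s)\Gamma(s)\big]\mathbb{E}(s,t)ds.$$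 The Riccati equation is $\dot P(t)+A^\top(t)P(t)+P(t)A(t)+Q(t,t)-\mathbb{Q}(t)-\Gamma^\top(t)M(t,t)\Gamma(t)=0$ on $[0,T)$, $P(T)=G(T)$. A solution is $P\in C([0,T];\mathbb{R}^{n\times n})$ satisfying, for all $t\in[0,T]$, $$P(t)=\mathbb{E}^\top(T,t)G(T)\mathbb{E}(T,t)+\int_t^T\mathbb{E}^\top(\tau,t)\big[Q(\tau,\tau)-S^\top(\tau,\tau)M^{-1}(\tau,\tau)S(\tau,\tau)-\mathbb{Q}(\tau)+P(\tau)B(\tau)M^{-1}(\tau,\tau)B^\top(\tau)P(\tau)\big]\mathbb{E}(\tau,t)d\tau,$$ or equivalently $P(t)=E^\top(T,t)G(T)E(T,t)+\int_t^TE^\top(\tau,t)\big[Q(\tau,\tau)-\mathbb{Q}(\tau)-\Gamma^\top(\tau)M(\tau,\tau)\Gamma(\tau)\big]E(\tau,t)d\tau$. *)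

theory Defs
  imports "HOL-Analysis.Analysis"
begin

text \<open>Matrices are represented as real^'c^'r (r rows, c columns); matrix product is **.
  Note that * on vec is componentwise, so matrix powers and the matrix exponential are
  defined explicitly here.\<close>

primrec mpow :: "real^'n^'n \<Rightarrow> nat \<Rightarrow> real^'n^'n" where
  "mpow X 0 = mat 1"
| "mpow X (Suc k) = X ** mpow X k"

definition mexp :: "real^'n^'n \<Rightarrow> real^'n^'n" where
  "mexp X = (\<Sum>k. (1 / fact k) *\<^sub>R mpow X k)"

definition sym_mat :: "real^'k^'k \<Rightarrow> bool" where
  "sym_mat X \<longleftrightarrow> transpose X = X"

definition pos_def :: "real^'k^'k \<Rightarrow> bool" where
  "pos_def X \<longleftrightarrow> sym_mat X \<and> (\<forall>x. x \<noteq> 0 \<longrightarrow> x \<bullet> (X *v x) > 0)"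

definition pos_semidef :: "real^'k^'k \<Rightarrow> bool" where
  "pos_semidef X \<longleftrightarrow> sym_mat X \<and> (\<forall>x. x \<bullet> (X *v x) \<ge> 0)"

definition Gam ::
  "(real \<Rightarrow> real \<Rightarrow> real^'m^'m) \<Rightarrow> (real \<Rightarrow> real^'m^'n) \<Rightarrow> (real \<Rightarrow> real \<Rightarrow> real^'n^'m)
   \<Rightarrow> (real \<Rightarrow> real^'n^'n) \<Rightarrow> real \<Rightarrow> real^'n^'m" where
  "Gam M B S P t = matrix_inv (M t t) ** (transpose (B t) ** P t + S t t)"

definition Emat :: "(real \<Rightarrow> real^'n^'n) \<Rightarrow> real \<Rightarrow> real \<Rightarrow> real^'n^'n" where
  "Emat A s t = mexp (LBINT \<tau>=t..s. A \<tau>)"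

definition EEmat ::
  "(real \<Rightarrow> real^'n^'n) \<Rightarrow> (real \<Rightarrow> real \<Rightarrow> real^'m^'m) \<Rightarrow> (real \<Rightarrow> real^'m^'n)
   \<Rightarrow> (real \<Rightarrow> real \<Rightarrow> real^'n^'m) \<Rightarrow> (real \<Rightarrow> real^'n^'n) \<Rightarrow> real \<Rightarrow> real \<Rightarrow> real^'n^'n" where
  "EEmat A M B S P s t = mexp (LBINT \<tau>=t..s. A \<tau> - B \<tau> ** Gam M B S P \<tau>)"

definition QQ ::
  "real \<Rightarrow> (real \<Rightarrow> real^'n^'n) \<Rightarrow> (real \<Rightarrow> real \<Rightarrow> real^'m^'m) \<Rightarrow> (real \<Rightarrow> real^'m^'n)
   \<Rightarrow> (real \<Rightarrow> real \<Rightarrow> real^'n^'m) \<Rightarrow> (real \<Rightarrow> real^'n^'n)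
   \<Rightarrow> (real \<Rightarrow> real \<Rightarrow> real^'n^'n) \<Rightarrow> (real \<Rightarrow> real \<Rightarrow> real^'n^'m) \<Rightarrow> (real \<Rightarrow> real \<Rightarrow> real^'m^'m)
   \<Rightarrow> (real \<Rightarrow> real^'n^'n) \<Rightarrow> real \<Rightarrow> real^'n^'n" where
  "QQ T A M B S Gd Qt St Mt P t =
     transpose (EEmat A M B S P T t) ** Gd t ** EEmat A M B S P T t
     + (LBINT s=t..T. transpose (EEmat A M B S P s t) **
          (Qt t s - transpose (Gam M B S P s) ** St t s - transpose (St t s) ** Gam M B S P s
           + transpose (Gam M B S P s) ** Mt t s ** Gam M B S P s) ** EEmat A M B S P s t)"

definition riccati_solution ::
  "real \<Rightarrow> (real \<Rightarrow> real^'n^'n) \<Rightarrow> (real \<Rightarrow> real^'m^'n)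
   \<Rightarrow> (real \<Rightarrow> real \<Rightarrow> real^'n^'n) \<Rightarrow> (real \<Rightarrow> real \<Rightarrow> real^'n^'m) \<Rightarrow> (real \<Rightarrow> real \<Rightarrow> real^'m^'m)
   \<Rightarrow> (real \<Rightarrow> real^'n^'n) \<Rightarrow> (real \<Rightarrow> real^'n^'n)
   \<Rightarrow> (real \<Rightarrow> real \<Rightarrow> real^'n^'n) \<Rightarrow> (real \<Rightarrow> real \<Rightarrow> real^'n^'m) \<Rightarrow> (real \<Rightarrow> real \<Rightarrow> real^'m^'m)
   \<Rightarrow> (real \<Rightarrow> real^'n^'n) \<Rightarrow> bool" where
  "riccati_solution T A B Q S M G Gd Qt St Mt P \<longleftrightarrow>
     continuous_on {0..T} P \<and>
     (\<forall>t\<in>{0..T}. P t =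
        transpose (EEmat A M B S P T t) ** G T ** EEmat A M B S P T t
        + (LBINT \<tau>=t..T. transpose (EEmat A M B S P \<tau> t) **
             (Q \<tau> \<tau> - transpose (S \<tau> \<tau>) ** matrix_inv (M \<tau> \<tau>) ** S \<tau> \<tau>
              - QQ T A M B S Gd Qt St Mt P \<tau>
              + P \<tau> ** B \<tau> ** matrix_inv (M \<tau> \<tau>) ** transpose (B \<tau>) ** P \<tau>)
             ** EEmat A M B S P \<tau> t))"

end

theory Submission
  imports Defs
begin

text \<open>
  Write \<open>d = \<parallel>P\<^sub>1 - P\<^sub>2\<parallel>\<close> and \<open>w = (1 + \<parallel>B\<parallel>)\<^sup>2\<close>, which is integrable because \<open>B\<close> is
  square integrable. The gain \<open>\<Gamma>\<close>, the closed-loop matrix \<open>A - B\<Gamma>\<close>, the matrices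
  \<open>E(s,t) = exp \<integral>\<^sub>t\<^sup>s (A - B\<Gamma>)\<close> (by local Lipschitz continuity of the exponential), the correction
  term \<open>QQ\<close> and finally the right-hand side of the integral equation all depend on \<open>P\<close>
  Lipschitz-continuously, up to the weight \<open>w\<close>. This yields \<open>d(t) \<le> C \<integral>\<^sub>t\<^sup>T w d\<close>, and a backward
  Gronwall argument forces \<open>d = 0\<close>. No semigroup property of \<open>E\<close> is needed.
\<close>

section \<open>Frobenius norm and matrix products\<close>

lemma power2_norm_vec: "(norm (x::'a::real_normed_vector^'n))\<^sup>2 = (\<Sum>i\<in>UNIV. (norm (x $ i))\<^sup>2)"
  by (simp add: norm_vec_def L2_set_def sum_nonneg)

lemma norm_transpose: "norm (transpose (X::real^'c^'r)) = norm X"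
proof -
  have "(norm (transpose X))\<^sup>2 = (norm X)\<^sup>2"
    unfolding power2_norm_eq_inner inner_vec_def transpose_def
    by (simp add: sum.swap[of _ "UNIV::'c set"])
  then show ?thesis by simp
qed

text \<open>The norm on \<open>real^'c^'r\<close> is the Frobenius norm. It is submultiplicative (Cauchy--Schwarz
  on each entry), so no dimension-dependent constants enter the estimates.\<close>

lemma norm_matrix_mult_le: "norm ((X::real^'k^'r) ** (Y::real^'c^'k)) \<le> norm X * norm Y"
proof -
  have entry: "((X ** Y) $ i $ j)\<^sup>2 \<le> (norm (X $ i))\<^sup>2 * (norm (transpose Y $ j))\<^sup>2" for i j
  proof -
    have "(X ** Y) $ i $ j = inner (X $ i) (transpose Y $ j)"
      by (simp add: matrix_matrix_mult_def transpose_def inner_vec_def)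
    then have "\<bar>(X ** Y) $ i $ j\<bar> \<le> norm (X $ i) * norm (transpose Y $ j)"
      by (simp add: Cauchy_Schwarz_ineq2)
    from power_mono[OF this abs_ge_zero, of 2] show ?thesis
      by (simp add: power_mult_distrib)
  qed
  have "(norm (X ** Y))\<^sup>2 = (\<Sum>i\<in>UNIV. \<Sum>j\<in>UNIV. ((X ** Y) $ i $ j)\<^sup>2)"
    by (simp only: power2_norm_vec real_norm_def power2_abs)
  also have "\<dots> \<le> (\<Sum>i\<in>UNIV. \<Sum>j\<in>UNIV. (norm (X $ i))\<^sup>2 * (norm (transpose Y $ j))\<^sup>2)"
    by (intro sum_mono entry)
  also have "\<dots> = (\<Sum>i\<in>UNIV. (norm (X $ i))\<^sup>2) * (\<Sum>j\<in>UNIV. (norm (transpose Y $ j))\<^sup>2)"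
    by (simp only: sum_product)
  also have "\<dots> = (norm X * norm Y)\<^sup>2"
    by (simp only: power2_norm_vec[symmetric] norm_transpose power_mult_distrib)
  finally show ?thesis
    by (rule power2_le_imp_le) simp
qed

lemma bounded_bilinear_matrix_mult:
  "bounded_bilinear ((**) :: real^'k^'r \<Rightarrow> real^'c^'k \<Rightarrow> real^'c^'r)"
proof
  show "\<exists>K. \<forall>X Y. norm ((X::real^'k^'r) ** (Y::real^'c^'k)) \<le> norm X * norm Y * K"
    by (rule exI[of _ 1]) (simp add: norm_matrix_mult_le)
qed (simp_all add: matrix_matrix_mult_def vec_eq_iff sum.distrib sum_distrib_left algebra_simps)

lemma bounded_linear_transpose: "bounded_linear (transpose :: real^'c^'r \<Rightarrow> real^'r^'c)"
proof (rule bounded_linear_intro[of _ 1])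
  show "transpose (X + Y) = transpose X + transpose Y" for X Y :: "real^'c^'r"
    by (simp add: transpose_def vec_eq_iff)
qed (simp_all add: transpose_scalar norm_transpose)

lemmas matrix_mult_diff_left = bounded_bilinear.diff_left[OF bounded_bilinear_matrix_mult]

lemmas matrix_mult_diff_right = bounded_bilinear.diff_right[OF bounded_bilinear_matrix_mult]

lemmas transpose_diff = linear_diff[OF bounded_linear.linear[OF bounded_linear_transpose]]

lemma continuous_on_matrix_mult[continuous_intros]:
  fixes f :: "'a::topological_space \<Rightarrow> real^'k^'r" and g :: "'a \<Rightarrow> real^'c^'k"
  shows "continuous_on S f \<Longrightarrow> continuous_on S g \<Longrightarrow> continuous_on S (\<lambda>x. f x ** g x)"
  by (rule bounded_bilinear.continuous_on[OF bounded_bilinear_matrix_mult])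

lemma continuous_on_transpose[continuous_intros]:
  fixes f :: "'a::topological_space \<Rightarrow> real^'c^'r"
  shows "continuous_on S f \<Longrightarrow> continuous_on S (\<lambda>x. transpose (f x))"
  by (rule bounded_linear.continuous_on[OF bounded_linear_transpose])

lemma norm_transpose_mult3_le:
  fixes X :: "real^'a^'k" and Y :: "real^'l^'k" and Z :: "real^'b^'l"
  shows "norm (transpose X ** Y ** Z) \<le> norm X * norm Y * norm Z"
proof -
  have "norm (transpose X ** Y ** Z) \<le> norm (transpose X ** Y) * norm Z"
    by (rule norm_matrix_mult_le)
  also have "\<dots> \<le> norm X * norm Y * norm Z"
    using norm_matrix_mult_le[of "transpose X" Y] by (simp add: norm_transpose mult_right_mono)
  finally show ?thesis .
qed

lemma norm_matrix_mult_le_bound: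
  fixes X :: "real^'k^'r" and Y :: "real^'c^'k"
  assumes "norm X \<le> a" "norm Y \<le> b"
  shows "norm (X ** Y) \<le> a * b"
proof -
  have "0 \<le> a"
    using assms(1) by (rule order_trans[OF norm_ge_zero])
  with assms have "norm X * norm Y \<le> a * b"
    by (intro mult_mono) auto
  with norm_matrix_mult_le[of X Y] show ?thesis
    by linarith
qed

lemma norm_sandwich_le_bound:
  fixes X :: "real^'n^'k" and Y :: "real^'k^'k"
  assumes "norm X \<le> e" "norm Y \<le> y"
  shows "norm (transpose X ** Y ** X) \<le> e * y * e"
proof -
  have "0 \<le> e" "0 \<le> y"
    using assms by (auto intro: order_trans[OF norm_ge_zero])
  then have "norm X * norm Y * norm X \<le> e * y * e"
    using assms by (intro mult_mono mult_nonneg_nonneg) auto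
  with norm_transpose_mult3_le[of X Y X] show ?thesis
    by linarith
qed

lemma norm_sandwich_diff_le:
  fixes X1 X2 :: "real^'n^'k" and Y1 Y2 :: "real^'k^'k"
  shows "norm (transpose X1 ** Y1 ** X1 - transpose X2 ** Y2 ** X2)
    \<le> norm (X1 - X2) * norm Y1 * norm X1 + norm X2 * norm (Y1 - Y2) * norm X1
      + norm X2 * norm Y2 * norm (X1 - X2)"
proof -
  have "transpose X1 ** Y1 ** X1 - transpose X2 ** Y2 ** X2
     = transpose (X1 - X2) ** Y1 ** X1 + transpose X2 ** (Y1 - Y2) ** X1
       + transpose X2 ** Y2 ** (X1 - X2)"
    by (simp add: transpose_diff matrix_mult_diff_left matrix_mult_diff_right)
  then show ?thesis
    using norm_transpose_mult3_le[of "X1 - X2" Y1 X1] norm_transpose_mult3_le[of X2 "Y1 - Y2" X1]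
      norm_transpose_mult3_le[of X2 Y2 "X1 - X2"]
    by (metis (no_types, lifting) add_mono norm_triangle_le)
qed

lemma norm_sandwich_diff_le_bound:
  fixes X1 X2 :: "real^'n^'k" and Y1 Y2 :: "real^'k^'k"
  assumes "norm X1 \<le> e" "norm X2 \<le> e" "norm (X1 - X2) \<le> \<delta>"
    and "norm Y1 \<le> y" "norm Y2 \<le> y" "norm (Y1 - Y2) \<le> \<eta>"
  shows "norm (transpose X1 ** Y1 ** X1 - transpose X2 ** Y2 ** X2) \<le> 2 * e * y * \<delta> + e * \<eta> * e"
proof -
  have "0 \<le> e" "0 \<le> \<delta>" "0 \<le> y" "0 \<le> \<eta>"
    using assms by (auto intro: order_trans[OF norm_ge_zero])
  then have "norm (X1 - X2) * norm Y1 * norm X1 + norm X2 * norm (Y1 - Y2) * norm X1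
      + norm X2 * norm Y2 * norm (X1 - X2) \<le> \<delta> * y * e + e * \<eta> * e + e * y * \<delta>"
    using assms by (intro add_mono mult_mono mult_nonneg_nonneg) auto
  with norm_sandwich_diff_le[of X1 Y1 X2 Y2] show ?thesis
    by (simp add: algebra_simps)
qed

section \<open>The matrix exponential\<close>

lemma norm_mpow_le: "norm (mpow X k) \<le> norm (mat 1 :: real^'n^'n) * norm (X::real^'n^'n) ^ k"
proof (induction k)
  case (Suc k)
  have "norm (mpow X (Suc k)) \<le> norm X * norm (mpow X k)"
    by (simp add: norm_matrix_mult_le)
  also have "\<dots> \<le> norm X * (norm (mat 1 :: real^'n^'n) * norm X ^ k)"
    using Suc.IH by (rule mult_left_mono) simp
  finally show ?case by (simp add: mult_ac)
qed simp

lemma norm_mpow_diff_le: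
  fixes X Y :: "real^'n^'n"
  assumes "norm X \<le> c" "norm Y \<le> c"
  shows "norm (mpow X k - mpow Y k) \<le> norm (mat 1 :: real^'n^'n) * (c + 1) ^ k * norm (X - Y)"
proof (induction k)
  case (Suc k)
  let ?N = "norm (mat 1 :: real^'n^'n)" and ?d = "norm (X - Y)"
  have c: "0 \<le> c" using assms(1) norm_ge_zero order_trans by blast
  have Yk: "norm (mpow Y k) \<le> ?N * c ^ k"
    using norm_mpow_le[of Y k] power_mono[OF assms(2), of k]
    by (meson mult_left_mono norm_ge_zero order_trans zero_le_power)
  have "mpow X (Suc k) - mpow Y (Suc k) = X ** (mpow X k - mpow Y k) + (X - Y) ** mpow Y k"
    by (simp add: matrix_mult_diff_left matrix_mult_diff_right)
  then have "norm (mpow X (Suc k) - mpow Y (Suc k))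
      \<le> norm X * norm (mpow X k - mpow Y k) + ?d * norm (mpow Y k)"
    by (metis norm_matrix_mult_le norm_triangle_le add_mono)
  also have "\<dots> \<le> c * (?N * (c + 1) ^ k * ?d) + ?d * (?N * c ^ k)"
    using assms Suc.IH Yk c by (intro add_mono mult_mono) auto
  also have "\<dots> \<le> c * (?N * (c + 1) ^ k * ?d) + ?d * (?N * (c + 1) ^ k)"
    using c by (intro add_mono mult_left_mono power_mono) auto
  also have "\<dots> = ?N * (c + 1) ^ Suc k * ?d"
    by (simp add: algebra_simps)
  finally show ?case .
qed simp

lemma exp_majorized_series:
  fixes f :: "nat \<Rightarrow> 'a::banach"
  assumes "\<And>k. norm (f k) \<le> C * (b ^ k / fact k)"
  shows "summable f" and "norm (suminf f) \<le> C * exp b"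
proof -
  have major: "(\<lambda>k. C * (b ^ k / fact k)) sums (C * exp b)"
    using exp_converges[of b] by (intro sums_mult) (simp add: divide_inverse mult.commute)
  have "summable (\<lambda>k. norm (f k))"
    by (rule summable_comparison_test'[OF sums_summable[OF major]]) (use assms in auto)
  then show "summable f" and "norm (suminf f) \<le> C * exp b"
    using summable_norm_cancel summable_norm suminf_le[OF assms _ sums_summable[OF major]]
      sums_unique[OF major] by (auto intro: order_trans)
qed

lemma summable_mexp_series: "summable (\<lambda>k. (1 / fact k) *\<^sub>R mpow (X::real^'n^'n) k)"
  using norm_mpow_le[of X]
  by (intro exp_majorized_series(1)[where C = "norm (mat 1 :: real^'n^'n)" and b = "norm X"])
     (simp add: divide_right_mono)

lemma norm_mexp_diff_le:
  fixes X Y :: "real^'n^'n"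
  assumes "norm X \<le> c" "norm Y \<le> c"
  shows "norm (mexp X - mexp Y) \<le> norm (mat 1 :: real^'n^'n) * exp (c + 1) * norm (X - Y)"
proof -
  have "mexp X - mexp Y = (\<Sum>k. (1 / fact k) *\<^sub>R (mpow X k - mpow Y k))"
    unfolding mexp_def
    by (simp add: suminf_diff[OF summable_mexp_series summable_mexp_series] scaleR_diff_right)
  also have "norm \<dots> \<le> norm (mat 1 :: real^'n^'n) * norm (X - Y) * exp (c + 1)"
    using norm_mpow_diff_le[OF assms]
    by (intro exp_majorized_series(2)) (simp add: divide_right_mono mult_ac)
  finally show ?thesis by (simp add: mult_ac)
qed

lemma continuous_on_mexp: "continuous_on S (mexp :: real^'n^'n \<Rightarrow> real^'n^'n)"
proof (rule continuous_at_imp_continuous_on, intro ballI)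
  fix X :: "real^'n^'n"
  let ?c = "norm X + 1"
  have "(norm (mat 1 :: real^'n^'n) * exp (?c + 1))-lipschitz_on (ball 0 ?c)
    (mexp :: real^'n^'n \<Rightarrow> real^'n^'n)"
  proof (rule lipschitz_onI)
    fix Y Z :: "real^'n^'n" assume "Y \<in> ball 0 ?c" "Z \<in> ball 0 ?c"
    then show "dist (mexp Y) (mexp Z) \<le> norm (mat 1 :: real^'n^'n) * exp (?c + 1) * dist Y Z"
      unfolding dist_norm by (intro norm_mexp_diff_le) auto
  qed simp
  then have "continuous_on (ball 0 ?c) (mexp :: real^'n^'n \<Rightarrow> real^'n^'n)"
    by (rule lipschitz_on_continuous_on)
  then show "isCont mexp X"
    by (simp add: continuous_on_eq_continuous_at)
qed

lemma continuous_on_det[continuous_intros]: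
  fixes f :: "'a::topological_space \<Rightarrow> real^'n^'n"
  shows "continuous_on S f \<Longrightarrow> continuous_on S (\<lambda>x. det (f x))"
  unfolding det_def by (intro continuous_intros)

text \<open>\<open>matrix_inv\<close> is defined by choice; Cramer's rule exhibits its entries as quotients of
  polynomials in the entries, which gives continuity.\<close>

lemma matrix_inv_cramer:
  fixes X :: "real^'n^'n"
  assumes "invertible X"
  shows "matrix_inv X $ k $ j = det (\<chi> i l. if l = k then axis j 1 $ i else X $ i $ l) / det X"
proof -
  have "X ** matrix_inv X = mat 1"
    using assms unfolding invertible_def matrix_inv_def by (rule someI_ex[THEN conjunct1])
  then have solve: "X *v (matrix_inv X *v axis j 1) = axis j 1"
    by (simp add: matrix_vector_mul_assoc)
  have entry: "(matrix_inv X *v axis j 1) $ k = matrix_inv X $ k $ j"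
    by (simp add: matrix_vector_mult_def axis_def if_distrib cong: if_cong)
  have "det (\<chi> i l. if l = k then axis j 1 $ i else X $ i $ l) = matrix_inv X $ k $ j * det X"
    using cramer_lemma[where A = X and k = k and x = "matrix_inv X *v axis j 1"]
    unfolding solve entry .
  then show ?thesis
    using assms by (simp add: invertible_det_nz)
qed

lemma continuous_on_matrix_inv:
  fixes f :: "'a::topological_space \<Rightarrow> real^'n^'n"
  assumes "continuous_on S f" and "\<And>x. x \<in> S \<Longrightarrow> invertible (f x)"
  shows "continuous_on S (\<lambda>x. matrix_inv (f x))"
proof -
  have column_replaced: "continuous_on S (\<lambda>x. \<chi> i l. if l = k then axis j 1 $ i else f x $ i $ l)"
    for k j :: 'n
  proof (intro continuous_on_vec_lambda)
    fix i l :: 'n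
    show "continuous_on S (\<lambda>x. if l = k then axis j 1 $ i else f x $ i $ l)"
      by (cases "l = k") (auto intro!: continuous_intros assms(1))
  qed
  have "continuous_on S (\<lambda>x. \<chi> k j. det (\<chi> i l. if l = k then axis j 1 $ i else f x $ i $ l) / det (f x))"
    using assms invertible_det_nz
    by (intro continuous_on_vec_lambda continuous_intros column_replaced) auto
  then show ?thesis
    by (rule continuous_on_cong[THEN iffD1, rotated 2]) (auto simp: vec_eq_iff matrix_inv_cramer assms(2))
qed

lemma pos_def_invertible: "pos_def (X::real^'n^'n) \<Longrightarrow> invertible X"
  unfolding pos_def_def
  by (metis inner_zero_right less_irrefl matrix_left_invertible_ker invertible_left_inverse)

lemma compact_continuous_norm_bound:
  assumes "compact K" "continuous_on K f"
  obtains c where "0 < c" "\<And>x. x \<in> K \<Longrightarrow> norm (f x) \<le> c"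
  using compact_imp_bounded[OF compact_continuous_image[OF assms(2,1)]] unfolding bounded_pos by auto

lemma continuous_on_diag:
  assumes "continuous_on (I \<times> I) (\<lambda>(t, s). X t s)"
  shows "continuous_on I (\<lambda>t. X t t)"
proof -
  have "continuous_on I (\<lambda>t. (\<lambda>(t, s). X t s) (t, t))"
    by (rule continuous_on_compose2[OF assms]) (auto intro!: continuous_intros)
  then show ?thesis by simp
qed

lemma continuous_on_section:
  assumes "continuous_on (I \<times> J) (\<lambda>(t, s). X t s)" "t \<in> I"
  shows "continuous_on J (X t)"
proof -
  have "continuous_on J (\<lambda>s. (\<lambda>(t, s). X t s) (t, s))"
    by (rule continuous_on_compose2[OF assms(1)]) (use assms(2) in \<open>auto intro!: continuous_intros\<close>)
  then show ?thesis by simp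
qed

section \<open>Measurability and set integrals\<close>

lemma set_borel_measurable_add:
  fixes f g :: "'a \<Rightarrow> 'b::{real_normed_vector, second_countable_topology}"
  assumes "set_borel_measurable M X f" "set_borel_measurable M X g"
  shows "set_borel_measurable M X (\<lambda>x. f x + g x)"
  using assms unfolding set_borel_measurable_def by (simp add: scaleR_add_right)

lemma set_borel_measurable_diff:
  fixes f g :: "'a \<Rightarrow> 'b::{real_normed_vector, second_countable_topology}"
  assumes "set_borel_measurable M X f" "set_borel_measurable M X g"
  shows "set_borel_measurable M X (\<lambda>x. f x - g x)"
  using assms unfolding set_borel_measurable_def by (simp add: scaleR_diff_right)

lemma set_borel_measurable_mult:
  fixes f g :: "'a \<Rightarrow> real"
  assumes "set_borel_measurable M X f" "set_borel_measurable M X g"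
  shows "set_borel_measurable M X (\<lambda>x. f x * g x)"
proof -
  have "(\<lambda>x. indicator X x *\<^sub>R (f x * g x)) = (\<lambda>x. (indicator X x *\<^sub>R f x) * (indicator X x *\<^sub>R g x))"
    by (auto simp: indicator_def)
  with assms show ?thesis unfolding set_borel_measurable_def by simp
qed

lemma set_borel_measurable_matrix_mult:
  fixes f :: "'a \<Rightarrow> real^'k^'r" and g :: "'a \<Rightarrow> real^'c^'k"
  assumes "set_borel_measurable M X f" "set_borel_measurable M X g"
  shows "set_borel_measurable M X (\<lambda>x. f x ** g x)"
proof -
  have eq: "(\<lambda>x. indicator X x *\<^sub>R (f x ** g x))
      = (\<lambda>x. (indicator X x *\<^sub>R f x) ** (indicator X x *\<^sub>R g x))"
    by (auto simp: indicator_def)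
  show ?thesis
    unfolding set_borel_measurable_def eq
    by (rule borel_measurable_continuous_Pair[OF assms[unfolded set_borel_measurable_def]])
       (intro continuous_intros)
qed

lemma set_borel_measurable_transpose:
  fixes f :: "'a \<Rightarrow> real^'c^'r"
  assumes "set_borel_measurable M X f"
  shows "set_borel_measurable M X (\<lambda>x. transpose (f x))"
proof -
  have eq: "(\<lambda>x. indicator X x *\<^sub>R transpose (f x)) = (\<lambda>x. transpose (indicator X x *\<^sub>R f x))"
    by (simp add: transpose_scalar)
  show ?thesis
    unfolding set_borel_measurable_def eq
    by (rule borel_measurable_continuous_on[OF _ assms[unfolded set_borel_measurable_def]])
       (intro continuous_intros)
qed

lemma set_borel_measurable_continuous_compose:
  fixes f :: "'a \<Rightarrow> 'b::{real_normed_vector, second_countable_topology}"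
    and h :: "'b \<Rightarrow> 'c::{real_normed_vector, second_countable_topology}"
  assumes "continuous_on UNIV h" "set_borel_measurable M X f" "X \<in> sets M"
  shows "set_borel_measurable M X (\<lambda>x. h (f x))"
proof -
  have eq: "(\<lambda>x. indicator X x *\<^sub>R h (f x)) = (\<lambda>x. indicator X x *\<^sub>R h (indicator X x *\<^sub>R f x))"
    by (auto simp: indicator_def)
  have "(\<lambda>x. indicator X x :: real) \<in> borel_measurable M"
    using assms(3) by simp
  moreover have "(\<lambda>x. h (indicator X x *\<^sub>R f x)) \<in> borel_measurable M"
    by (rule borel_measurable_continuous_on[OF assms(1) assms(2)[unfolded set_borel_measurable_def]])
  ultimately show ?thesis
    unfolding set_borel_measurable_def eq by (rule borel_measurable_scaleR)
qed

lemma set_borel_measurable_continuous_on: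
  fixes f :: "'a::euclidean_space \<Rightarrow> 'b::real_normed_vector"
  assumes "X \<in> sets borel" "continuous_on Y f" "X \<subseteq> Y"
  shows "set_borel_measurable lborel X f"
  using set_measurable_continuous_on[OF assms(1) continuous_on_subset[OF assms(2,3)]]
  by (simp add: set_borel_measurable_def)

lemma set_borel_measurable_if_integrable:
  fixes f :: "'a \<Rightarrow> 'b::{banach, second_countable_topology}"
  shows "set_integrable M X f \<Longrightarrow> set_borel_measurable M X f"
  unfolding set_integrable_def set_borel_measurable_def by (rule borel_measurable_integrable)

lemma set_borel_measurable_cong:
  fixes f g :: "'a \<Rightarrow> 'b::real_normed_vector"
  assumes "set_borel_measurable M X f" "\<And>x. x \<in> X \<Longrightarrow> f x = g x"
  shows "set_borel_measurable M X g"
proof -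
  have "(\<lambda>x. indicator X x *\<^sub>R f x) = (\<lambda>x. indicator X x *\<^sub>R g x)"
    using assms(2) by (intro ext) (auto simp: indicator_def)
  with assms(1) show ?thesis unfolding set_borel_measurable_def by simp
qed

lemma set_borel_measurable_snd:
  assumes "set_borel_measurable M X f"
  shows "set_borel_measurable (N \<Otimes>\<^sub>M M) {x. snd x \<in> X} (\<lambda>x. f (snd x))"
proof -
  have eq: "(\<lambda>x. indicator {x. snd x \<in> X} x *\<^sub>R f (snd x)) = (\<lambda>x. indicator X (snd x) *\<^sub>R f (snd x))"
    by (auto simp: indicator_def)
  show ?thesis
    unfolding set_borel_measurable_def eq
    by (rule measurable_compose[OF measurable_snd assms[unfolded set_borel_measurable_def]])
qed

lemma set_borel_measurable_set_integral_param:
  fixes K :: "real \<Rightarrow> real \<Rightarrow> 'b::{banach, second_countable_topology}"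
  assumes "set_borel_measurable (lborel \<Otimes>\<^sub>M lborel) {x. a < fst x \<and> fst x < snd x \<and> snd x < b}
             (\<lambda>x. K (fst x) (snd x))"
  shows "set_borel_measurable lborel {a<..<b} (\<lambda>t. LINT s:{t<..<b}|lborel. K t s)"
proof -
  define U where "U = {x. a < fst x \<and> fst x < snd x \<and> snd x < b}"
  define k where "k x = indicator U x *\<^sub>R K (fst x) (snd x)" for x
  have "(\<lambda>(t, s). k (t, s)) \<in> borel_measurable (lborel \<Otimes>\<^sub>M lborel)"
    using assms unfolding set_borel_measurable_def U_def[symmetric] k_def[abs_def]
    by (simp add: case_prod_beta')
  then have "(\<lambda>t. \<integral>s. k (t, s) \<partial>lborel) \<in> borel_measurable lborel"
    by (rule lborel.borel_measurable_lebesgue_integral)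
  then have "set_borel_measurable lborel {a<..<b} (\<lambda>t. \<integral>s. k (t, s) \<partial>lborel)"
    unfolding set_borel_measurable_def by simp
  moreover have "(\<integral>s. k (t, s) \<partial>lborel) = (LINT s:{t<..<b}|lborel. K t s)" if "t \<in> {a<..<b}" for t
  proof -
    have "(\<lambda>s. k (t, s)) = (\<lambda>s. indicator {t<..<b} s *\<^sub>R K t s)"
      using that by (auto simp: k_def U_def indicator_def)
    then show ?thesis by (simp add: set_lebesgue_integral_def)
  qed
  ultimately show ?thesis by (rule set_borel_measurable_cong)
qed

lemma set_integrable_bound_mult:
  fixes f :: "'a \<Rightarrow> 'b::{banach, second_countable_topology}"
  assumes "set_integrable M X h" "set_borel_measurable M X f" "\<And>x. x \<in> X \<Longrightarrow> norm (f x) \<le> c * h x"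
  shows "set_integrable M X f"
proof (rule set_integrable_bound[where f = "\<lambda>x. c * h x"])
  show "AE x in M. x \<in> X \<longrightarrow> norm (f x) \<le> norm (c * h x)"
    using assms(3) by (auto intro!: AE_I2 order_trans[OF _ abs_ge_self])
qed (use assms in simp_all)

lemma norm_set_integral_le:
  fixes f :: "'a \<Rightarrow> 'b::{banach, second_countable_topology}"
  assumes "set_integrable M X f" "set_integrable M X h" "\<And>x. x \<in> X \<Longrightarrow> norm (f x) \<le> h x"
  shows "norm (LINT x:X|M. f x) \<le> (LINT x:X|M. h x)"
  using set_integral_norm_bound[OF assms(1)]
    set_integral_mono[OF set_integrable_norm[OF assms(1)] assms(2,3)]
  by linarith

lemma set_integral_mono_set:
  fixes f :: "'a \<Rightarrow> real"
  assumes "set_integrable M Y f" "X \<in> sets M" "X \<subseteq> Y" "\<And>x. x \<in> Y \<Longrightarrow> 0 \<le> f x"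
  shows "(LINT x:X|M. f x) \<le> (LINT x:Y|M. f x)"
  using set_integrable_subset[OF assms(1-3)] assms(1) unfolding set_lebesgue_integral_def set_integrable_def
  by (rule integral_mono) (use assms(3,4) in \<open>auto simp: indicator_def\<close>)

lemma interval_integral_eq_set_integral:
  "a \<le> b \<Longrightarrow> (LBINT u=ereal a..ereal b. g u) = (LINT u:{a<..<b}|lborel. g u)"
  by (simp add: interval_lebesgue_integral_def)

lemma continuous_on_interval_integral:
  fixes g :: "real \<Rightarrow> 'a::euclidean_space"
  assumes "set_integrable lborel {a<..<b} g"
  shows "continuous_on {a..b} (\<lambda>s. LBINT x=a..s. g x)"
proof -
  have "g integrable_on {a..b}"
    using set_borel_integral_eq_integral(1)[OF assms] integrable_on_Icc_iff_Ioo by blast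
  then have "continuous_on {a..b} (\<lambda>s. integral {a..s} g)"
    by (rule indefinite_integral_continuous_1)
  moreover have "integral {a..s} g = (LBINT x=a..s. g x)" if "s \<in> {a..b}" for s
  proof -
    have "set_integrable lborel {a<..<s} g"
      by (rule set_integrable_subset[OF assms]) (use that in auto)
    then show ?thesis
      using that by (simp add: interval_integral_eq_set_integral set_borel_integral_eq_integral(2)
          integral_open_interval_real)
  qed
  ultimately show ?thesis
    by (rule continuous_on_eq)
qed

lemma interval_integral_eq_primitive_diff:
  fixes g :: "real \<Rightarrow> 'a::{banach, second_countable_topology}"
  assumes "set_integrable lborel {a<..<b} g" "t \<in> {a..b}" "s \<in> {a..b}"
  shows "(LBINT x=t..s. g x) = (LBINT x=a..s. g x) - (LBINT x=a..t. g x)"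
proof -
  define m where "m = max t s"
  have "min (ereal a) (min (ereal t) (ereal s)) = ereal a"
    "max (ereal a) (max (ereal t) (ereal s)) = ereal m" "a \<le> m"
    using assms(2,3) by (auto simp: m_def min_def max_def)
  moreover have "set_integrable lborel {a<..<m} g"
    by (rule set_integrable_subset[OF assms(1)]) (use assms in \<open>auto simp: m_def\<close>)
  ultimately have "interval_lebesgue_integrable lborel (min (ereal a) (min (ereal t) (ereal s)))
      (max (ereal a) (max (ereal t) (ereal s))) g"
    by (simp add: interval_lebesgue_integrable_def)
  from interval_integral_sum[OF this] show ?thesis
    by (simp add: algebra_simps)
qed

lemma set_integral_Ioo_split:
  fixes g :: "real \<Rightarrow> 'a::{banach, second_countable_topology}"
  assumes "set_integrable lborel {x<..<z} g" "x \<le> y" "y \<le> z"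
  shows "(LINT u:{x<..<z}|lborel. g u) = (LINT u:{x<..<y}|lborel. g u) + (LINT u:{y<..<z}|lborel. g u)"
proof -
  have "(LBINT u=ereal x..ereal y. g u) + (LBINT u=ereal y..ereal z. g u) = (LBINT u=ereal x..ereal z. g u)"
  proof (rule interval_integral_sum)
    have "min (ereal x) (min (ereal y) (ereal z)) = ereal x" "max (ereal x) (max (ereal y) (ereal z)) = ereal z"
      using assms(2,3) by (simp_all add: min_def max_def)
    then show "interval_lebesgue_integrable lborel (min (ereal x) (min (ereal y) (ereal z)))
        (max (ereal x) (max (ereal y) (ereal z))) g"
      using assms by (simp add: interval_lebesgue_integrable_def)
  qed
  then show ?thesis
    unfolding interval_integral_eq_set_integral[OF assms(2)] interval_integral_eq_set_integral[OF assms(3)]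
      interval_integral_eq_set_integral[OF order_trans[OF assms(2,3)]]
    by simp
qed

lemma set_integrable_sandwich:
  fixes E :: "'a \<Rightarrow> real^'n^'k" and Y :: "'a \<Rightarrow> real^'k^'k"
  assumes "set_integrable M X w" "set_borel_measurable M X E" "set_borel_measurable M X Y"
    and "\<And>s. s \<in> X \<Longrightarrow> norm (E s) \<le> e" "\<And>s. s \<in> X \<Longrightarrow> norm (Y s) \<le> c * w s"
  shows "set_integrable M X (\<lambda>s. transpose (E s) ** Y s ** E s)"
proof (rule set_integrable_bound_mult[OF assms(1)])
  show "set_borel_measurable M X (\<lambda>s. transpose (E s) ** Y s ** E s)"
    using assms(2,3) by (intro set_borel_measurable_matrix_mult set_borel_measurable_transpose)
  show "norm (transpose (E s) ** Y s ** E s) \<le> e * c * e * w s" if "s \<in> X" for s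
    using norm_sandwich_le_bound[OF assms(4,5)[OF that]] by (simp add: mult_ac)
qed

lemma norm_set_integral_sandwich_diff_le:
  fixes E1 E2 :: "'a \<Rightarrow> real^'n^'k" and Y1 Y2 :: "'a \<Rightarrow> real^'k^'k"
  assumes int1: "set_integrable M X (\<lambda>s. transpose (E1 s) ** Y1 s ** E1 s)"
    and int2: "set_integrable M X (\<lambda>s. transpose (E2 s) ** Y2 s ** E2 s)"
    and w: "set_integrable M X w" and v: "set_integrable M X v"
    and E: "\<And>s. s \<in> X \<Longrightarrow> norm (E1 s) \<le> e" "\<And>s. s \<in> X \<Longrightarrow> norm (E2 s) \<le> e"
    and E_diff: "\<And>s. s \<in> X \<Longrightarrow> norm (E1 s - E2 s) \<le> \<delta>"
    and Y: "\<And>s. s \<in> X \<Longrightarrow> norm (Y1 s) \<le> c * w s" "\<And>s. s \<in> X \<Longrightarrow> norm (Y2 s) \<le> c * w s"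
    and Y_diff: "\<And>s. s \<in> X \<Longrightarrow> norm (Y1 s - Y2 s) \<le> a * w s + b * v s"
  shows "norm ((LINT s:X|M. transpose (E1 s) ** Y1 s ** E1 s) - (LINT s:X|M. transpose (E2 s) ** Y2 s ** E2 s))
    \<le> (2 * e * c * \<delta> + e * a * e) * (LINT s:X|M. w s) + e * b * e * (LINT s:X|M. v s)"
proof -
  let ?h = "\<lambda>s. (2 * e * c * \<delta> + e * a * e) * w s + e * b * e * v s"
  have "norm ((LINT s:X|M. transpose (E1 s) ** Y1 s ** E1 s) - (LINT s:X|M. transpose (E2 s) ** Y2 s ** E2 s))
      = norm (LINT s:X|M. transpose (E1 s) ** Y1 s ** E1 s - transpose (E2 s) ** Y2 s ** E2 s)"
    by (simp add: set_integral_diff(2)[OF int1 int2])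
  also have "\<dots> \<le> (LINT s:X|M. ?h s)"
  proof (rule norm_set_integral_le)
    show "set_integrable M X (\<lambda>s. transpose (E1 s) ** Y1 s ** E1 s - transpose (E2 s) ** Y2 s ** E2 s)"
      using int1 int2 by (rule set_integral_diff(1))
    show "set_integrable M X ?h"
      using w v by (intro set_integral_add(1) set_integrable_mult_right)
    show "norm (transpose (E1 s) ** Y1 s ** E1 s - transpose (E2 s) ** Y2 s ** E2 s) \<le> ?h s"
      if "s \<in> X" for s
      using norm_sandwich_diff_le_bound[OF E[OF that] E_diff[OF that] Y[OF that] Y_diff[OF that]]
      by (simp add: algebra_simps)
  qed
  also have "\<dots> = (2 * e * c * \<delta> + e * a * e) * (LINT s:X|M. w s) + e * b * e * (LINT s:X|M. v s)"
    using w v by (simp add: set_integral_add(2) set_integrable_mult_right)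
  finally show ?thesis .
qed

section \<open>A backward Gronwall lemma\<close>

lemma small_set_integral_left_of:
  fixes w :: "real \<Rightarrow> real"
  assumes w_int: "set_integrable lborel {a<..<b} w" and s: "s \<in> {a..b}" and e: "0 < e"
  obtains r where "r \<in> {a..s}" "r < s \<or> r = a" "(LINT u:{r<..<s}|lborel. w u) < e"
proof -
  define W where "W t = (LBINT u=a..t. w u)" for t :: real
  have "continuous_on {a..b} W"
    unfolding W_def by (rule continuous_on_interval_integral[OF w_int])
  then obtain d where d: "0 < d" "\<And>r. r \<in> {a..b} \<Longrightarrow> dist r s < d \<Longrightarrow> dist (W r) (W s) < e"
    using s e unfolding continuous_on_iff by blast
  define r where "r = max a (s - d / 2)"
  have r: "r \<in> {a..s}" "r < s \<or> r = a" "dist r s < d"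
    using s d(1) by (auto simp: r_def dist_real_def)
  have "(LINT u:{r<..<s}|lborel. w u) = (LBINT u=r..s. w u)"
    using r(1) by (simp add: interval_integral_eq_set_integral)
  also have "\<dots> = W s - W r"
    unfolding W_def using r(1) s by (intro interval_integral_eq_primitive_diff[OF w_int]) auto
  also have "\<dots> < e"
    using d(2)[of r] r s by (auto simp: dist_real_def)
  finally have "(LINT u:{r<..<s}|lborel. w u) < e" .
  with r(1,2) show ?thesis
    by (rule that)
qed

context
  fixes a b C :: real and f w :: "real \<Rightarrow> real"
  assumes f_cont: "continuous_on {a..b} f"
    and f_nonneg: "\<And>t. t \<in> {a..b} \<Longrightarrow> 0 \<le> f t"
    and w_nonneg: "\<And>t. 0 \<le> w t"
    and w_int: "set_integrable lborel {a<..<b} w"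
    and wf_int: "set_integrable lborel {a<..<b} (\<lambda>u. w u * f u)"
    and f_le: "\<And>t. t \<in> {a..b} \<Longrightarrow> f t \<le> C * (LINT u:{t<..<b}|lborel. w u * f u)"
begin

lemma tail_integral_le_max:
  assumes "a \<le> r" "r \<le> m" "m \<le> s" "s \<le> b"
    and max: "\<And>u. u \<in> {r..s} \<Longrightarrow> f u \<le> f m"
    and vanish: "\<And>u. u \<in> {a..b} \<Longrightarrow> s < u \<Longrightarrow> f u = 0"
  shows "(LINT u:{m<..<b}|lborel. w u * f u) \<le> f m * (LINT u:{r<..<s}|lborel. w u)"
proof -
  have "(LINT u:{s<..<b}|lborel. w u * f u) = (LINT u:{s<..<b}|lborel. 0)"
    by (rule set_lebesgue_integral_cong) (use assms in auto)
  moreover have "{m<..<b} \<subseteq> {a<..<b}"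
    using assms by auto
  ultimately have "(LINT u:{m<..<b}|lborel. w u * f u) = (LINT u:{m<..<s}|lborel. w u * f u)"
    using set_integral_Ioo_split[OF set_integrable_subset[OF wf_int], of m b s] assms by simp
  also have "\<dots> \<le> (LINT u:{m<..<s}|lborel. f m * w u)"
  proof (rule set_integral_mono)
    show "set_integrable lborel {m<..<s} (\<lambda>u. w u * f u)"
      by (rule set_integrable_subset[OF wf_int]) (use assms in auto)
    show "set_integrable lborel {m<..<s} (\<lambda>u. f m * w u)"
      by (intro set_integrable_mult_right set_integrable_subset[OF w_int]) (use assms in auto)
    fix u assume "u \<in> {m<..<s}"
    then have "f u \<le> f m"
      using assms by (intro max) auto
    from mult_left_mono[OF this w_nonneg] show "w u * f u \<le> f m * w u"
      by (simp add: mult.commute)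
  qed
  also have "\<dots> \<le> f m * (LINT u:{r<..<s}|lborel. w u)"
  proof -
    have "(LINT u:{m<..<s}|lborel. w u) \<le> (LINT u:{r<..<s}|lborel. w u)"
      by (rule set_integral_mono_set[OF set_integrable_subset[OF w_int]]) (use assms w_nonneg in auto)
    then show ?thesis
      using assms f_nonneg[of m] by (simp add: mult_left_mono)
  qed
  finally show ?thesis .
qed

text \<open>If \<open>f\<close> vanishes to the right of \<open>s\<close>, it vanishes on some \<open>[r, s]\<close> too: there the weight has
  mass below \<open>1 / (2 (\<bar>C\<bar> + 1))\<close>, so the maximum of \<open>f\<close> on \<open>[r, s]\<close> is at most half of itself.\<close>

lemma backward_gronwall_step:
  assumes s: "s \<in> {a..b}" and vanish: "\<And>u. u \<in> {a..b} \<Longrightarrow> s < u \<Longrightarrow> f u = 0"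
  shows "\<exists>r\<in>{a..s}. (r < s \<or> r = a) \<and> (\<forall>u\<in>{r..b}. f u = 0)"
proof -
  define e where "e = 1 / (2 * (\<bar>C\<bar> + 1))"
  have e: "0 < e" "\<bar>C\<bar> * e \<le> 1 / 2"
    unfolding e_def by (auto simp: field_simps)
  obtain r where r: "r \<in> {a..s}" "r < s \<or> r = a" and small: "(LINT u:{r<..<s}|lborel. w u) < e"
    using small_set_integral_left_of[OF w_int s e(1)] by blast
  obtain m where m: "m \<in> {r..s}" "\<And>u. u \<in> {r..s} \<Longrightarrow> f u \<le> f m"
    using continuous_attains_sup[of "{r..s}" f] continuous_on_subset[OF f_cont, of "{r..s}"] r s
    by auto
  have mI: "m \<in> {a..b}" and fm: "0 \<le> f m"
    using m(1) r s f_nonneg by auto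
  have "(LINT u:{m<..<b}|lborel. w u * f u) \<le> f m * e"
    using tail_integral_le_max[of r m s, OF _ _ _ _ m(2) vanish] m(1) r s
      mult_left_mono[OF less_imp_le[OF small] fm] by auto
  moreover have "0 \<le> (LINT u:{m<..<b}|lborel. w u * f u)"
    unfolding set_lebesgue_integral_def using w_nonneg f_nonneg mI
    by (intro integral_nonneg_AE AE_I2) (auto simp: indicator_def)
  ultimately have "f m \<le> \<bar>C\<bar> * (f m * e)"
    using f_le[OF mI] abs_ge_self[of C] by (meson mult_left_mono mult_right_mono abs_ge_zero order_trans)
  also have "\<dots> \<le> f m / 2"
    using mult_left_mono[OF e(2) fm] by (simp add: mult.left_commute)
  finally have fm0: "f m = 0"
    using fm by simp
  have "f u = 0" if "u \<in> {r..b}" for u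
    using that m(2)[of u] f_nonneg[of u] vanish[of u] fm0 r s by (cases "u \<le> s") auto
  with r show ?thesis by blast
qed

lemma backward_gronwall:
  assumes "t \<in> {a..b}"
  shows "f t = 0"
proof -
  define Z where "Z = {r \<in> {a..b}. \<forall>u\<in>{r..b}. f u = 0}"
  have "b \<in> {a..b}"
    using assms by auto
  with backward_gronwall_step[of b] obtain r0 where "r0 \<in> {a..b}" "\<forall>u\<in>{r0..b}. f u = 0"
    by fastforce
  then have r0: "r0 \<in> Z"
    by (simp add: Z_def)
  have bdd: "bdd_below Z"
    unfolding Z_def by (rule bdd_belowI[of _ a]) simp
  define s where "s = Inf Z"
  have "a \<le> s"
    unfolding s_def using r0 by (intro cInf_greatest) (auto simp: Z_def)
  moreover have "s \<le> r0"
    unfolding s_def by (rule cInf_lower[OF r0 bdd])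
  ultimately have s: "s \<in> {a..b}"
    using \<open>r0 \<in> {a..b}\<close> by simp
  have "f u = 0" if u: "u \<in> {a..b}" "s < u" for u
  proof -
    obtain z where "z \<in> Z" "z < u"
      using cInf_lessD[of Z u] r0 u(2) unfolding s_def by blast
    with u(1) show ?thesis
      by (simp add: Z_def)
  qed
  with s obtain r where r: "r \<in> {a..s}" "r < s \<or> r = a" "\<forall>u\<in>{r..b}. f u = 0"
    using backward_gronwall_step by blast
  then have "r \<in> Z"
    using s by (simp add: Z_def)
  then have "s \<le> r"
    unfolding s_def by (rule cInf_lower[OF _ bdd])
  with r(1,2) have "r = a"
    by simp
  with r(3) assms show ?thesis
    by simp
qed

end

locale riccati_data =
  fixes T :: real
    and A :: "real \<Rightarrow> real^'n^'n" and B :: "real \<Rightarrow> real^'m^'n"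
    and Q :: "real \<Rightarrow> real \<Rightarrow> real^'n^'n" and S :: "real \<Rightarrow> real \<Rightarrow> real^'n^'m"
    and M :: "real \<Rightarrow> real \<Rightarrow> real^'m^'m" and G Gd :: "real \<Rightarrow> real^'n^'n"
    and Qt :: "real \<Rightarrow> real \<Rightarrow> real^'n^'n" and St :: "real \<Rightarrow> real \<Rightarrow> real^'n^'m"
    and Mt :: "real \<Rightarrow> real \<Rightarrow> real^'m^'m"
  assumes T_nonneg: "0 \<le> T"
    and A_L1: "set_integrable lborel {0<..<T} A"
    and B_meas: "set_borel_measurable lborel {0<..<T} B"
    and B_L2: "set_integrable lborel {0<..<T} (\<lambda>t. (norm (B t))\<^sup>2)"
    and M_cont: "continuous_on ({0..T} \<times> {0..T}) (\<lambda>(t, s). M t s)"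
    and M_pd: "\<And>t s. t \<in> {0..T} \<Longrightarrow> s \<in> {0..T} \<Longrightarrow> pos_def (M t s)"
    and Q_cont: "continuous_on ({0..T} \<times> {0..T}) (\<lambda>(t, s). Q t s)"
    and S_cont: "continuous_on ({0..T} \<times> {0..T}) (\<lambda>(t, s). S t s)"
    and Gd_cont: "continuous_on {0..T} Gd"
    and Qt_cont: "continuous_on ({0..T} \<times> {0..T}) (\<lambda>(t, s). Qt t s)"
    and St_cont: "continuous_on ({0..T} \<times> {0..T}) (\<lambda>(t, s). St t s)"
    and Mt_cont: "continuous_on ({0..T} \<times> {0..T}) (\<lambda>(t, s). Mt t s)"

begin

text \<open>Every estimate below holds up to a constant times this weight; it dominates \<open>\<parallel>B\<parallel>\<close> and
  \<open>\<parallel>B\<parallel>\<^sup>2\<close>, which is where the square integrability of \<open>B\<close> enters.\<close>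

definition weight :: "real \<Rightarrow> real" where
  "weight t = (1 + norm (B t))\<^sup>2"

lemma weight_nonneg: "0 \<le> weight t"
  unfolding weight_def by simp

lemma one_plus_norm_B_le_weight: "1 + norm (B t) \<le> weight t"
  using mult_left_mono[of 1 "1 + norm (B t)" "1 + norm (B t)"]
  unfolding weight_def by (simp add: power2_eq_square)

lemma weight_ge_one: "1 \<le> weight t"
  using one_plus_norm_B_le_weight[of t] norm_ge_zero[of "B t"] by linarith

lemma norm_B_le_weight: "norm (B t) \<le> weight t"
  using one_plus_norm_B_le_weight[of t] by simp

lemma norm_B_mult_le_weight: "norm (B t) * (1 + norm (B t)) \<le> weight t"
  unfolding weight_def by (simp add: power2_eq_square mult_right_mono)

lemma weight_integrable: "set_integrable lborel {0<..<T} weight"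
proof (rule set_integrable_bound_mult[where c = 2])
  have "set_integrable lborel {0..T} (\<lambda>_. 1::real)"
    by (rule borel_integrable_atLeastAtMost') (rule continuous_on_const)
  then show "set_integrable lborel {0<..<T} (\<lambda>t. 1 + (norm (B t))\<^sup>2)"
    by (intro set_integral_add(1) B_L2) (auto intro: set_integrable_subset)
  show "set_borel_measurable lborel {0<..<T} weight"
    unfolding weight_def[abs_def]
    by (rule set_borel_measurable_continuous_compose[OF _ B_meas]) (auto intro!: continuous_intros)
  show "norm (weight t) \<le> 2 * (1 + (norm (B t))\<^sup>2)" for t
  proof -
    have "2 * (1 + (norm (B t))\<^sup>2) - weight t = (1 - norm (B t))\<^sup>2"
      unfolding weight_def by (simp add: power2_eq_square algebra_simps)
    then have "weight t \<le> 2 * (1 + (norm (B t))\<^sup>2)"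
      by (metis diff_ge_0_iff_ge zero_le_power2)
    with weight_ge_one[of t] show ?thesis
      by simp
  qed
qed

lemma weight_set_integral_nonneg: "0 \<le> (LINT u:X|lborel. weight u)"
  unfolding set_lebesgue_integral_def using weight_ge_one
  by (intro integral_nonneg_AE AE_I2) (auto simp: indicator_def intro: order_trans[OF zero_le_one])

lemma weight_set_integral_le:
  "0 \<le> t \<Longrightarrow> (LINT u:{t<..<T}|lborel. weight u) \<le> (LINT u:{0<..<T}|lborel. weight u)"
  using weight_ge_one
  by (intro set_integral_mono_set[OF weight_integrable]) (auto intro: order_trans[OF zero_le_one])

lemma Minv_cont: "continuous_on {0..T} (\<lambda>t. matrix_inv (M t t))"
  using M_pd by (intro continuous_on_matrix_inv continuous_on_diag[OF M_cont] pos_def_invertible) auto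

definition data_bound :: real where
  "data_bound = (SUP (t, s)\<in>{0..T} \<times> {0..T}. norm (matrix_inv (M t t)) + norm (Q t t) + norm (S t t)
     + norm (Gd t) + norm (Qt t s) + norm (St t s) + norm (Mt t s))"

lemma data_bound:
  assumes "t \<in> {0..T}" "s \<in> {0..T}"
  shows "norm (matrix_inv (M t t)) \<le> data_bound" "norm (Q t t) \<le> data_bound"
    "norm (S t t) \<le> data_bound" "norm (Gd t) \<le> data_bound"
    "norm (Qt t s) \<le> data_bound" "norm (St t s) \<le> data_bound" "norm (Mt t s) \<le> data_bound"
proof -
  let ?II = "{0..T} \<times> {0..T}"
  have fst: "continuous_on ?II (\<lambda>x. X (fst x))" if "continuous_on {0..T} X" for X :: "real \<Rightarrow> real^'k^'l"
    by (rule continuous_on_compose2[OF that]) (auto intro: continuous_intros)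
  have "continuous_on ?II (\<lambda>x. norm (matrix_inv (M (fst x) (fst x))) + norm (Q (fst x) (fst x))
      + norm (S (fst x) (fst x)) + norm (Gd (fst x)) + norm (Qt (fst x) (snd x))
      + norm (St (fst x) (snd x)) + norm (Mt (fst x) (snd x)))"
    using Qt_cont St_cont Mt_cont
    by (intro continuous_intros fst Minv_cont Gd_cont continuous_on_diag[OF Q_cont]
        continuous_on_diag[OF S_cont]) (simp_all add: case_prod_beta')
  then have bdd: "bdd_above ((\<lambda>(t, s). norm (matrix_inv (M t t)) + norm (Q t t) + norm (S t t)
      + norm (Gd t) + norm (Qt t s) + norm (St t s) + norm (Mt t s)) ` ?II)"
    by (intro bounded_imp_bdd_above compact_imp_bounded compact_continuous_image compact_Times compact_Icc)
      (simp add: case_prod_beta')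
  have "norm (matrix_inv (M t t)) + norm (Q t t) + norm (S t t) + norm (Gd t)
      + norm (Qt t s) + norm (St t s) + norm (Mt t s) \<le> data_bound"
    unfolding data_bound_def using cSUP_upper[OF _ bdd, of "(t, s)"] assms by simp
  then show "norm (matrix_inv (M t t)) \<le> data_bound" "norm (Q t t) \<le> data_bound"
    "norm (S t t) \<le> data_bound" "norm (Gd t) \<le> data_bound"
    "norm (Qt t s) \<le> data_bound" "norm (St t s) \<le> data_bound" "norm (Mt t s) \<le> data_bound"
    using norm_ge_zero[of "matrix_inv (M t t)"] norm_ge_zero[of "Q t t"] norm_ge_zero[of "S t t"]
      norm_ge_zero[of "Gd t"] norm_ge_zero[of "Qt t s"] norm_ge_zero[of "St t s"] norm_ge_zero[of "Mt t s"]
    by linarith+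
qed

lemma data_bound_nonneg: "0 \<le> data_bound"
proof -
  have "norm (Q 0 0) \<le> data_bound"
    using T_nonneg by (intro data_bound) auto
  then show ?thesis
    by (rule order_trans[OF norm_ge_zero])
qed

definition closed_loop :: "(real \<Rightarrow> real^'n^'n) \<Rightarrow> real \<Rightarrow> real^'n^'n" where
  "closed_loop P t = A t - B t ** Gam M B S P t"

definition QQ_kernel :: "(real \<Rightarrow> real^'n^'n) \<Rightarrow> real \<Rightarrow> real \<Rightarrow> real^'n^'n" where
  "QQ_kernel P t s = Qt t s - transpose (Gam M B S P s) ** St t s - transpose (St t s) ** Gam M B S P s
     + transpose (Gam M B S P s) ** Mt t s ** Gam M B S P s"

definition riccati_source :: "(real \<Rightarrow> real^'n^'n) \<Rightarrow> real \<Rightarrow> real^'n^'n" where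
  "riccati_source P t = Q t t - transpose (S t t) ** matrix_inv (M t t) ** S t t
     - QQ T A M B S Gd Qt St Mt P t + P t ** B t ** matrix_inv (M t t) ** transpose (B t) ** P t"

lemma QQ_eq_set_integral:
  assumes "t \<in> {0..T}"
  shows "QQ T A M B S Gd Qt St Mt P t
    = transpose (EEmat A M B S P T t) ** Gd t ** EEmat A M B S P T t
      + (LINT s:{t<..<T}|lborel. transpose (EEmat A M B S P s t) ** QQ_kernel P t s ** EEmat A M B S P s t)"
  using assms unfolding QQ_def QQ_kernel_def by (simp add: interval_integral_eq_set_integral)

lemma EEmat_eq_mexp_set_integral:
  "t \<le> s \<Longrightarrow> EEmat A M B S P s t = mexp (LINT x:{t<..<s}|lborel. closed_loop P x)"
  unfolding EEmat_def closed_loop_def by (simp add: interval_integral_eq_set_integral)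

lemma riccati_solution_eq_set_integral:
  assumes "riccati_solution T A B Q S M G Gd Qt St Mt P" "t \<in> {0..T}"
  shows "P t = transpose (EEmat A M B S P T t) ** G T ** EEmat A M B S P T t
      + (LINT s:{t<..<T}|lborel. transpose (EEmat A M B S P s t) ** riccati_source P s ** EEmat A M B S P s t)"
  using assms unfolding riccati_solution_def riccati_source_def
  by (simp add: interval_integral_eq_set_integral)

end

section \<open>Bounds for a single candidate\<close>

locale riccati_candidate = riccati_data T A B Q S M G Gd Qt St Mt
  for T and A :: "real \<Rightarrow> real^'n^'n" and B Q S M G Gd Qt St Mt +
  fixes P :: "real \<Rightarrow> real^'n^'n"
  assumes P_cont: "continuous_on {0..T} P"

begin

lemma P_bound:
  obtains c where "0 \<le> c" "\<And>t. t \<in> {0..T} \<Longrightarrow> norm (P t) \<le> c"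
  using compact_continuous_norm_bound[OF compact_Icc P_cont] by (metis less_imp_le)

lemma Gam_bound:
  obtains c where "0 \<le> c" "\<And>t. t \<in> {0..T} \<Longrightarrow> norm (Gam M B S P t) \<le> c * (1 + norm (B t))"
proof -
  obtain p where p: "0 \<le> p" "\<And>t. t \<in> {0..T} \<Longrightarrow> norm (P t) \<le> p"
    using P_bound by blast
  let ?d = data_bound
  have "norm (Gam M B S P t) \<le> ?d * (p + ?d) * (1 + norm (B t))" if t: "t \<in> {0..T}" for t
  proof -
    have "norm (transpose (B t) ** P t) \<le> norm (B t) * p"
      using p(2)[OF t] by (intro norm_matrix_mult_le_bound) (simp_all add: norm_transpose)
    then have "norm (transpose (B t) ** P t + S t t) \<le> norm (B t) * p + ?d"
      using data_bound(3)[OF t t] by (intro norm_triangle_le add_mono)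
    also have "\<dots> \<le> (p + ?d) * (1 + norm (B t))"
      using p(1) data_bound_nonneg by (simp add: algebra_simps)
    finally have "norm (transpose (B t) ** P t + S t t) \<le> (p + ?d) * (1 + norm (B t))" .
    from norm_matrix_mult_le_bound[OF data_bound(1)[OF t t] this] show ?thesis
      unfolding Gam_def by (simp add: mult.assoc)
  qed
  with p(1) data_bound_nonneg show ?thesis
    by (intro that[of "?d * (p + ?d)"]) auto
qed

lemma Gam_measurable: "set_borel_measurable lborel {0<..<T} (Gam M B S P)"
proof -
  have "set_borel_measurable lborel {0<..<T} (\<lambda>t. matrix_inv (M t t) ** (transpose (B t) ** P t + S t t))"
    by (intro set_borel_measurable_matrix_mult set_borel_measurable_add set_borel_measurable_transpose
        B_meas set_borel_measurable_continuous_on[OF _ Minv_cont]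
        set_borel_measurable_continuous_on[OF _ P_cont]
        set_borel_measurable_continuous_on[OF _ continuous_on_diag[OF S_cont]]) auto
  then show ?thesis
    unfolding Gam_def[abs_def] .
qed

lemma closed_loop_integrable: "set_integrable lborel {0<..<T} (closed_loop P)"
proof -
  obtain c where c: "0 \<le> c" "\<And>t. t \<in> {0..T} \<Longrightarrow> norm (Gam M B S P t) \<le> c * (1 + norm (B t))"
    using Gam_bound by blast
  show ?thesis
  proof (rule set_integrable_bound_mult[where c = "1 + c"])
    show "set_integrable lborel {0<..<T} (\<lambda>t. norm (A t) + weight t)"
      by (intro set_integral_add(1) set_integrable_norm A_L1 weight_integrable)
    show "set_borel_measurable lborel {0<..<T} (closed_loop P)"
      unfolding closed_loop_def[abs_def]
      by (intro set_borel_measurable_diff set_borel_measurable_matrix_mult Gam_measurable B_meas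
          set_borel_measurable_if_integrable A_L1)
    fix t assume "t \<in> {0<..<T}"
    then have "norm (B t ** Gam M B S P t) \<le> norm (B t) * (c * (1 + norm (B t)))"
      by (intro norm_matrix_mult_le_bound c(2)) auto
    also have "\<dots> \<le> c * weight t"
      using mult_left_mono[OF norm_B_mult_le_weight c(1)] by (simp add: mult_ac)
    finally have "norm (B t ** Gam M B S P t) \<le> c * weight t" .
    moreover have "(1 + c) * (norm (A t) + weight t) = norm (A t) + c * weight t + (c * norm (A t) + weight t)"
      by (simp add: algebra_simps)
    ultimately show "norm (closed_loop P t) \<le> (1 + c) * (norm (A t) + weight t)"
      unfolding closed_loop_def
      using norm_triangle_ineq4[of "A t" "B t ** Gam M B S P t"] weight_nonneg[of t]
        mult_nonneg_nonneg[OF c(1) norm_ge_zero[of "A t"]] by linarith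
  qed
qed

lemma closed_loop_integral_bound:
  obtains l where "\<And>t s. 0 \<le> t \<Longrightarrow> s \<le> T \<Longrightarrow> norm (LINT x:{t<..<s}|lborel. closed_loop P x) \<le> l"
proof
  fix t s :: real assume ts: "0 \<le> t" "s \<le> T"
  have "set_integrable lborel {t<..<s} (closed_loop P)"
    by (rule set_integrable_subset[OF closed_loop_integrable]) (use ts in auto)
  then have "norm (LINT x:{t<..<s}|lborel. closed_loop P x) \<le> (LINT x:{t<..<s}|lborel. norm (closed_loop P x))"
    by (rule set_integral_norm_bound)
  also have "\<dots> \<le> (LINT x:{0<..<T}|lborel. norm (closed_loop P x))"
    by (rule set_integral_mono_set[OF set_integrable_norm[OF closed_loop_integrable]]) (use ts in auto)
  finally show "norm (LINT x:{t<..<s}|lborel. closed_loop P x) \<le> (LINT x:{0<..<T}|lborel. norm (closed_loop P x))" .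
qed

lemma continuous_on_EEmat: "continuous_on ({0..T} \<times> {0..T}) (\<lambda>(t, s). EEmat A M B S P s t)"
proof -
  define I where "I s = (LBINT x=0..s. closed_loop P x)" for s :: real
  have I: "continuous_on {0..T} I"
    using continuous_on_interval_integral[OF closed_loop_integrable] by (simp add: I_def zero_ereal_def)
  have "continuous_on ({0..T} \<times> {0..T}) (\<lambda>x. I (snd x))" "continuous_on ({0..T} \<times> {0..T}) (\<lambda>x. I (fst x))"
    by (rule continuous_on_compose2[OF I]; auto intro!: continuous_intros)+
  then have "continuous_on ({0..T} \<times> {0..T}) (\<lambda>x. mexp (I (snd x) - I (fst x)))"
    by (intro continuous_on_compose2[OF continuous_on_mexp[of UNIV]] continuous_intros) auto
  moreover have "mexp (I (snd x) - I (fst x)) = (\<lambda>(t, s). EEmat A M B S P s t) x"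
    if "x \<in> {0..T} \<times> {0..T}" for x
    using that interval_integral_eq_primitive_diff[OF closed_loop_integrable, of "fst x" "snd x"]
    by (auto simp: EEmat_def I_def closed_loop_def zero_ereal_def split: prod.split)
  ultimately show ?thesis
    by (rule continuous_on_eq)
qed

lemma EEmat_bound:
  obtains e where "0 \<le> e" "\<And>s t. s \<in> {0..T} \<Longrightarrow> t \<in> {0..T} \<Longrightarrow> norm (EEmat A M B S P s t) \<le> e"
proof -
  obtain e where "0 < e" "\<And>x. x \<in> {0..T} \<times> {0..T} \<Longrightarrow> norm ((\<lambda>(t, s). EEmat A M B S P s t) x) \<le> e"
    using compact_continuous_norm_bound[OF compact_Times[OF compact_Icc compact_Icc] continuous_on_EEmat]
    by blast
  then show ?thesis
    by (intro that[of e]) fastforce+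
qed

lemma QQ_kernel_bound:
  obtains c where "0 \<le> c" "\<And>t s. t \<in> {0..T} \<Longrightarrow> s \<in> {0..T} \<Longrightarrow> norm (QQ_kernel P t s) \<le> c * weight s"
proof -
  obtain g where g: "0 \<le> g" "\<And>s. s \<in> {0..T} \<Longrightarrow> norm (Gam M B S P s) \<le> g * (1 + norm (B s))"
    using Gam_bound by blast
  let ?d = data_bound
  have "norm (QQ_kernel P t s) \<le> (?d + 2 * g * ?d + g * ?d * g) * weight s"
    if t: "t \<in> {0..T}" and s: "s \<in> {0..T}" for t s
  proof -
    let ?\<Gamma> = "Gam M B S P s" and ?b = "1 + norm (B s)"
    have b: "1 \<le> ?b" "?b \<le> weight s" "?b * ?b = weight s"
      using one_plus_norm_B_le_weight[of s] by (simp_all add: weight_def power2_eq_square)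
    let ?x1 = "transpose ?\<Gamma> ** St t s" and ?x2 = "transpose (St t s) ** ?\<Gamma>"
      and ?x3 = "transpose ?\<Gamma> ** Mt t s ** ?\<Gamma>"
    have \<Gamma>: "norm ?\<Gamma> \<le> g * ?b" "norm (transpose ?\<Gamma>) \<le> g * ?b"
      using g(2)[OF s] by (simp_all add: norm_transpose)
    have "norm ?x1 \<le> g * ?d * ?b" "norm ?x2 \<le> g * ?d * ?b"
      using norm_matrix_mult_le_bound[OF \<Gamma>(2) data_bound(6)[OF t s]]
        norm_matrix_mult_le_bound[OF _ \<Gamma>(1), of "transpose (St t s)" ?d] data_bound(6)[OF t s]
      by (simp_all add: norm_transpose mult_ac)
    moreover have "norm ?x3 \<le> g * ?d * g * (?b * ?b)"
      using norm_sandwich_le_bound[OF \<Gamma>(1) data_bound(7)[OF t s]] by (simp add: mult_ac)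
    moreover have "norm (Qt t s - ?x1 - ?x2 + ?x3) \<le> norm (Qt t s) + norm ?x1 + norm ?x2 + norm ?x3"
      using norm_triangle_ineq[of "Qt t s - ?x1 - ?x2" ?x3] norm_triangle_ineq4[of "Qt t s - ?x1" ?x2]
        norm_triangle_ineq4[of "Qt t s" ?x1] by linarith
    ultimately have "norm (QQ_kernel P t s) \<le> ?d + 2 * (g * ?d * ?b) + g * ?d * g * (?b * ?b)"
      unfolding QQ_kernel_def using data_bound(5)[OF t s] by linarith
    also have "\<dots> = ?d + 2 * (g * ?d * ?b) + g * ?d * g * weight s"
      using b(3) by simp
    also have "\<dots> \<le> ?d * weight s + 2 * (g * ?d * weight s) + g * ?d * g * weight s"
      using mult_left_mono[OF weight_ge_one[of s] data_bound_nonneg]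
        mult_left_mono[OF b(2), of "g * ?d"] g(1) data_bound_nonneg
      by simp
    also have "\<dots> = (?d + 2 * g * ?d + g * ?d * g) * weight s"
      by (simp add: algebra_simps)
    finally show ?thesis .
  qed
  with g(1) data_bound_nonneg show ?thesis
    by (intro that[of "?d + 2 * g * ?d + g * ?d * g"]) auto
qed

lemma QQ_kernel_measurable:
  assumes "t \<in> {0..T}"
  shows "set_borel_measurable lborel {0<..<T} (QQ_kernel P t)"
  unfolding QQ_kernel_def[abs_def]
  by (intro set_borel_measurable_add set_borel_measurable_diff set_borel_measurable_matrix_mult
      set_borel_measurable_transpose Gam_measurable
      set_borel_measurable_continuous_on[OF _ continuous_on_section[OF Qt_cont assms]]
      set_borel_measurable_continuous_on[OF _ continuous_on_section[OF St_cont assms]]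
      set_borel_measurable_continuous_on[OF _ continuous_on_section[OF Mt_cont assms]]) auto

lemma QQ_integrand_integrable:
  assumes t: "t \<in> {0..T}"
  shows "set_integrable lborel {t<..<T}
    (\<lambda>s. transpose (EEmat A M B S P s t) ** QQ_kernel P t s ** EEmat A M B S P s t)"
proof -
  obtain e where e: "\<And>s. s \<in> {0..T} \<Longrightarrow> norm (EEmat A M B S P s t) \<le> e"
    using EEmat_bound t by metis
  obtain c where c: "\<And>s. s \<in> {0..T} \<Longrightarrow> norm (QQ_kernel P t s) \<le> c * weight s"
    using QQ_kernel_bound t by metis
  have sub: "{t<..<T} \<subseteq> {0<..<T}" "{t<..<T} \<subseteq> {0..T}"
    using t by auto
  show ?thesis
  proof (rule set_integrable_sandwich[where e = e and c = c])
    show "set_integrable lborel {t<..<T} weight"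
      by (rule set_integrable_subset[OF weight_integrable _ sub(1)]) simp
    show "set_borel_measurable lborel {t<..<T} (\<lambda>s. EEmat A M B S P s t)"
      by (rule set_borel_measurable_continuous_on[OF _ continuous_on_section[OF continuous_on_EEmat t] sub(2)])
        simp
    show "set_borel_measurable lborel {t<..<T} (QQ_kernel P t)"
      by (rule set_borel_measurable_subset[OF QQ_kernel_measurable[OF t] _ sub(1)]) simp
  qed (use e c sub in auto)
qed

lemma QQ_bound:
  obtains c where "0 \<le> c" "\<And>t. t \<in> {0..T} \<Longrightarrow> norm (QQ T A M B S Gd Qt St Mt P t) \<le> c"
proof -
  obtain e where e: "0 \<le> e" "\<And>s t. s \<in> {0..T} \<Longrightarrow> t \<in> {0..T} \<Longrightarrow> norm (EEmat A M B S P s t) \<le> e"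
    using EEmat_bound by blast
  obtain k where k: "0 \<le> k" "\<And>t s. t \<in> {0..T} \<Longrightarrow> s \<in> {0..T} \<Longrightarrow> norm (QQ_kernel P t s) \<le> k * weight s"
    using QQ_kernel_bound by blast
  let ?W = "LINT u:{0<..<T}|lborel. weight u"
  have "norm (QQ T A M B S Gd Qt St Mt P t) \<le> e * data_bound * e + e * k * e * ?W"
    if t: "t \<in> {0..T}" for t
  proof -
    have "norm (LINT s:{t<..<T}|lborel. transpose (EEmat A M B S P s t) ** QQ_kernel P t s ** EEmat A M B S P s t)
        \<le> (LINT s:{t<..<T}|lborel. e * k * e * weight s)"
    proof (rule norm_set_integral_le[OF QQ_integrand_integrable[OF t]])
      show "set_integrable lborel {t<..<T} (\<lambda>s. e * k * e * weight s)"
        using t by (intro set_integrable_mult_right set_integrable_subset[OF weight_integrable]) auto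
      show "norm (transpose (EEmat A M B S P s t) ** QQ_kernel P t s ** EEmat A M B S P s t)
          \<le> e * k * e * weight s" if "s \<in> {t<..<T}" for s
        using norm_sandwich_le_bound[OF e(2) k(2)] that t by (simp add: mult_ac)
    qed
    also have "\<dots> = e * k * e * (LINT s:{t<..<T}|lborel. weight s)"
      by simp
    also have "\<dots> \<le> e * k * e * ?W"
      using t e(1) k(1) by (intro mult_left_mono weight_set_integral_le) auto
    finally have "norm (LINT s:{t<..<T}|lborel. transpose (EEmat A M B S P s t) ** QQ_kernel P t s ** EEmat A M B S P s t)
        \<le> e * k * e * ?W" .
    moreover have "norm (transpose (EEmat A M B S P T t) ** Gd t ** EEmat A M B S P T t) \<le> e * data_bound * e"
      using t T_nonneg by (intro norm_sandwich_le_bound e(2) data_bound(4)[of t t]) auto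
    ultimately show ?thesis
      unfolding QQ_eq_set_integral[OF t] by (intro norm_triangle_le add_mono)
  qed
  with e(1) k(1) data_bound_nonneg weight_set_integral_nonneg show ?thesis
    by (intro that[of "e * data_bound * e + e * k * e * ?W"]) auto
qed

lemma QQ_measurable: "set_borel_measurable lborel {0<..<T} (QQ T A M B S Gd Qt St Mt P)"
proof -
  define U where "U = {x :: real \<times> real. 0 < fst x \<and> fst x < snd x \<and> snd x < T}"
  have U: "U \<in> sets borel" "U \<subseteq> {0..T} \<times> {0..T}" "U \<subseteq> {x. snd x \<in> {0<..<T}}"
    unfolding U_def by (auto intro!: borel_open open_Collect_conj open_Collect_less continuous_intros)
  have cont: "set_borel_measurable (lborel \<Otimes>\<^sub>M lborel) U (\<lambda>x. X (fst x) (snd x))"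
    if "continuous_on ({0..T} \<times> {0..T}) (\<lambda>(t, s). X t s)" for X :: "real \<Rightarrow> real \<Rightarrow> real^'k^'l"
    unfolding lborel_prod using that
    by (intro set_borel_measurable_continuous_on[OF U(1) _ U(2)]) (simp add: case_prod_beta')
  have \<Gamma>: "set_borel_measurable (lborel \<Otimes>\<^sub>M lborel) U (\<lambda>x. Gam M B S P (snd x))"
    by (rule set_borel_measurable_subset[OF set_borel_measurable_snd[OF Gam_measurable]])
      (use U in \<open>simp_all only: lborel_prod sets_lborel\<close>)
  have "set_borel_measurable (lborel \<Otimes>\<^sub>M lborel) U (\<lambda>x. transpose (EEmat A M B S P (snd x) (fst x))
      ** QQ_kernel P (fst x) (snd x) ** EEmat A M B S P (snd x) (fst x))"
    unfolding QQ_kernel_def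
    by (intro \<Gamma> set_borel_measurable_add set_borel_measurable_diff set_borel_measurable_matrix_mult
        set_borel_measurable_transpose cont continuous_on_EEmat Qt_cont St_cont Mt_cont)
  then have "set_borel_measurable lborel {0<..<T} (\<lambda>t. LINT s:{t<..<T}|lborel.
      transpose (EEmat A M B S P s t) ** QQ_kernel P t s ** EEmat A M B S P s t)"
    unfolding U_def by (rule set_borel_measurable_set_integral_param)
  moreover have "continuous_on {0..T} (\<lambda>t. (\<lambda>(t, s). EEmat A M B S P s t) (t, T))"
    by (rule continuous_on_compose2[OF continuous_on_EEmat]) (use T_nonneg in \<open>auto intro!: continuous_intros\<close>)
  then have "set_borel_measurable lborel {0<..<T} (\<lambda>t. transpose (EEmat A M B S P T t) ** Gd t ** EEmat A M B S P T t)"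
    by (intro set_borel_measurable_continuous_on[of _ "{0..T}"] continuous_intros Gd_cont) auto
  ultimately show ?thesis
    by (rule set_borel_measurable_cong[OF set_borel_measurable_add]) (simp add: QQ_eq_set_integral)
qed

lemma riccati_source_bound:
  obtains c where "0 \<le> c" "\<And>t. t \<in> {0..T} \<Longrightarrow> norm (riccati_source P t) \<le> c * weight t"
proof -
  obtain p where p: "0 \<le> p" "\<And>t. t \<in> {0..T} \<Longrightarrow> norm (P t) \<le> p"
    using P_bound by blast
  obtain q where q: "0 \<le> q" "\<And>t. t \<in> {0..T} \<Longrightarrow> norm (QQ T A M B S Gd Qt St Mt P t) \<le> q"
    using QQ_bound by blast
  let ?d = data_bound
  have "norm (riccati_source P t) \<le> (?d + ?d * ?d * ?d + q + p * p * ?d) * weight t"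
    if t: "t \<in> {0..T}" for t
  proof -
    let ?b = "norm (B t)"
    have SMS: "norm (transpose (S t t) ** matrix_inv (M t t) ** S t t) \<le> ?d * ?d * ?d"
      using data_bound[OF t t]
      by (intro norm_matrix_mult_le_bound) (auto simp: norm_transpose)
    have "norm (P t ** B t ** matrix_inv (M t t) ** transpose (B t) ** P t) \<le> p * ?b * ?d * ?b * p"
      using p(2)[OF t] data_bound(1)[OF t t]
      by (intro norm_matrix_mult_le_bound) (auto simp: norm_transpose)
    also have "\<dots> = p * p * ?d * ?b\<^sup>2"
      by (simp add: power2_eq_square mult_ac)
    also have "\<dots> \<le> p * p * ?d * weight t"
      using p(1) data_bound_nonneg by (intro mult_left_mono) (auto simp: weight_def power2_mono)
    finally have PBMBP: "norm (P t ** B t ** matrix_inv (M t t) ** transpose (B t) ** P t) \<le> p * p * ?d * weight t" .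
    have "norm (riccati_source P t) \<le> ?d + ?d * ?d * ?d + q + p * p * ?d * weight t"
      unfolding riccati_source_def using data_bound(2)[OF t t] SMS q(2)[OF t] PBMBP
      by (intro norm_triangle_le norm_triangle_le_diff add_mono) auto
    also have "\<dots> \<le> (?d + ?d * ?d * ?d + q) * weight t + p * p * ?d * weight t"
    proof -
      have "0 \<le> ?d + ?d * ?d * ?d + q"
        using q(1) data_bound_nonneg by simp
      from mult_left_mono[OF weight_ge_one[of t] this] show ?thesis
        by simp
    qed
    finally show ?thesis
      by (simp add: algebra_simps)
  qed
  with p(1) q(1) data_bound_nonneg show ?thesis
    by (intro that[of "?d + ?d * ?d * ?d + q + p * p * ?d"]) auto
qed

lemma riccati_source_measurable: "set_borel_measurable lborel {0<..<T} (riccati_source P)"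
  unfolding riccati_source_def[abs_def]
  by (intro set_borel_measurable_add set_borel_measurable_diff set_borel_measurable_matrix_mult
      set_borel_measurable_transpose B_meas QQ_measurable
      set_borel_measurable_continuous_on[OF _ Minv_cont]
      set_borel_measurable_continuous_on[OF _ P_cont]
      set_borel_measurable_continuous_on[OF _ continuous_on_diag[OF Q_cont]]
      set_borel_measurable_continuous_on[OF _ continuous_on_diag[OF S_cont]]) auto

lemma riccati_integrand_integrable:
  assumes t: "t \<in> {0..T}"
  shows "set_integrable lborel {t<..<T}
    (\<lambda>s. transpose (EEmat A M B S P s t) ** riccati_source P s ** EEmat A M B S P s t)"
proof -
  obtain e where e: "\<And>s. s \<in> {0..T} \<Longrightarrow> norm (EEmat A M B S P s t) \<le> e"
    using EEmat_bound t by metis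
  obtain c where c: "\<And>s. s \<in> {0..T} \<Longrightarrow> norm (riccati_source P s) \<le> c * weight s"
    using riccati_source_bound by metis
  have sub: "{t<..<T} \<subseteq> {0<..<T}" "{t<..<T} \<subseteq> {0..T}"
    using t by auto
  show ?thesis
  proof (rule set_integrable_sandwich[where e = e and c = c])
    show "set_integrable lborel {t<..<T} weight"
      by (rule set_integrable_subset[OF weight_integrable _ sub(1)]) simp
    show "set_borel_measurable lborel {t<..<T} (\<lambda>s. EEmat A M B S P s t)"
      by (rule set_borel_measurable_continuous_on[OF _ continuous_on_section[OF continuous_on_EEmat t] sub(2)])
        simp
    show "set_borel_measurable lborel {t<..<T} (riccati_source P)"
      by (rule set_borel_measurable_subset[OF riccati_source_measurable _ sub(1)]) simp
  qed (use e c sub in auto)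
qed

end

section \<open>Comparison of two candidates\<close>

locale riccati_pair = riccati_data T A B Q S M G Gd Qt St Mt
  for T and A :: "real \<Rightarrow> real^'n^'n" and B Q S M G Gd Qt St Mt +
  fixes P1 P2 :: "real \<Rightarrow> real^'n^'n"
  assumes P1_cont: "continuous_on {0..T} P1" and P2_cont: "continuous_on {0..T} P2"

begin

sublocale p1: riccati_candidate T A B Q S M G Gd Qt St Mt P1
  by unfold_locales (rule P1_cont)

sublocale p2: riccati_candidate T A B Q S M G Gd Qt St Mt P2
  by unfold_locales (rule P2_cont)

definition gap :: "real \<Rightarrow> real" where
  "gap t = norm (P1 t - P2 t)"

definition tail_gap :: "real \<Rightarrow> real" where
  "tail_gap t = (LINT u:{t<..<T}|lborel. weight u * gap u)"

lemma gap_cont: "continuous_on {0..T} gap"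
  unfolding gap_def[abs_def] by (intro continuous_intros P1_cont P2_cont)

lemma weighted_gap_integrable: "set_integrable lborel {0<..<T} (\<lambda>u. weight u * gap u)"
proof -
  obtain c where c: "\<And>t. t \<in> {0..T} \<Longrightarrow> norm (gap t) \<le> c"
    using compact_continuous_norm_bound[OF compact_Icc gap_cont] by metis
  show ?thesis
  proof (rule set_integrable_bound_mult[OF weight_integrable, where c = c])
    show "set_borel_measurable lborel {0<..<T} (\<lambda>u. weight u * gap u)"
      by (intro set_borel_measurable_mult set_borel_measurable_if_integrable weight_integrable
          set_borel_measurable_continuous_on[OF _ gap_cont]) auto
    show "norm (weight u * gap u) \<le> c * weight u" if "u \<in> {0<..<T}" for u
      using c[of u] that weight_ge_one[of u]
      by (simp add: abs_mult mult.commute mult_left_mono)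
  qed
qed

lemma weighted_gap_nonneg: "0 \<le> weight u * gap u"
  using weight_ge_one[of u] by (intro mult_nonneg_nonneg) (auto simp: gap_def)

lemma weighted_gap_set_integral_le:
  assumes "0 \<le> t" "t \<le> s" "s \<le> T"
  shows "(LINT u:{s<..<T}|lborel. weight u * gap u) \<le> tail_gap t"
    and "(LINT u:{t<..<s}|lborel. weight u * gap u) \<le> tail_gap t"
  unfolding tail_gap_def using assms weighted_gap_nonneg
  by (intro set_integral_mono_set[OF set_integrable_subset[OF weighted_gap_integrable]]; auto)+

lemma tail_gap_nonneg: "0 \<le> tail_gap t"
  unfolding tail_gap_def set_lebesgue_integral_def using weighted_gap_nonneg
  by (intro integral_nonneg_AE AE_I2) (simp add: indicator_def)

lemma Gam_diff_le:
  assumes "t \<in> {0..T}"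
  shows "norm (Gam M B S P1 t - Gam M B S P2 t) \<le> data_bound * (norm (B t) * gap t)"
proof -
  have "Gam M B S P1 t - Gam M B S P2 t = matrix_inv (M t t) ** (transpose (B t) ** (P1 t - P2 t))"
    unfolding Gam_def by (simp add: matrix_mult_diff_right[symmetric])
  then show ?thesis
    using data_bound(1)[OF assms assms]
    by (simp add: norm_matrix_mult_le_bound norm_matrix_mult_le norm_transpose gap_def)
qed

lemma closed_loop_diff_le:
  assumes "t \<in> {0..T}"
  shows "norm (closed_loop P1 t - closed_loop P2 t) \<le> data_bound * (weight t * gap t)"
proof -
  have "closed_loop P1 t - closed_loop P2 t = B t ** (Gam M B S P2 t - Gam M B S P1 t)"
    unfolding closed_loop_def by (simp add: matrix_mult_diff_right)
  also have "norm \<dots> \<le> norm (B t) * (data_bound * (norm (B t) * gap t))"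
    using Gam_diff_le[OF assms] by (intro norm_matrix_mult_le_bound) (simp_all add: norm_minus_commute)
  also have "\<dots> = data_bound * gap t * (norm (B t))\<^sup>2"
    by (simp add: power2_eq_square mult_ac)
  also have "\<dots> \<le> data_bound * gap t * weight t"
    using data_bound_nonneg by (intro mult_left_mono) (auto simp: weight_def power2_mono gap_def)
  finally show ?thesis
    by (simp add: mult_ac)
qed

lemma EEmat_diff_bound:
  obtains c where "0 \<le> c"
    "\<And>t s. 0 \<le> t \<Longrightarrow> t \<le> s \<Longrightarrow> s \<le> T \<Longrightarrow>
      norm (EEmat A M B S P1 s t - EEmat A M B S P2 s t) \<le> c * tail_gap t"
proof -
  obtain l1 where l1: "\<And>t s. 0 \<le> t \<Longrightarrow> s \<le> T \<Longrightarrow> norm (LINT x:{t<..<s}|lborel. closed_loop P1 x) \<le> l1"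
    using p1.closed_loop_integral_bound by blast
  obtain l2 where l2: "\<And>t s. 0 \<le> t \<Longrightarrow> s \<le> T \<Longrightarrow> norm (LINT x:{t<..<s}|lborel. closed_loop P2 x) \<le> l2"
    using p2.closed_loop_integral_bound by blast
  let ?l = "max l1 l2" and ?N = "norm (mat 1 :: real^'n^'n)"
  have "norm (EEmat A M B S P1 s t - EEmat A M B S P2 s t) \<le> ?N * exp (?l + 1) * data_bound * tail_gap t"
    if ts: "0 \<le> t" "t \<le> s" "s \<le> T" for t s
  proof -
    let ?X = "\<lambda>P. LINT x:{t<..<s}|lborel. closed_loop P x"
    have int: "set_integrable lborel {t<..<s} (closed_loop P1)" "set_integrable lborel {t<..<s} (closed_loop P2)"
      using ts by (auto intro: set_integrable_subset[OF p1.closed_loop_integrable]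
          set_integrable_subset[OF p2.closed_loop_integrable])
    have "norm (?X P1) \<le> ?l" "norm (?X P2) \<le> ?l"
      using l1[OF ts(1,3)] l2[OF ts(1,3)] by (simp_all add: le_max_iff_disj)
    then have "norm (mexp (?X P1) - mexp (?X P2)) \<le> ?N * exp (?l + 1) * norm (?X P1 - ?X P2)"
      by (rule norm_mexp_diff_le)
    also have "norm (?X P1 - ?X P2) \<le> (LINT x:{t<..<s}|lborel. data_bound * (weight x * gap x))"
      unfolding set_integral_diff(2)[OF int, symmetric]
    proof (rule norm_set_integral_le)
      show "set_integrable lborel {t<..<s} (\<lambda>x. closed_loop P1 x - closed_loop P2 x)"
        using int by (rule set_integral_diff(1))
      show "set_integrable lborel {t<..<s} (\<lambda>x. data_bound * (weight x * gap x))"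
        using ts by (intro set_integrable_mult_right set_integrable_subset[OF weighted_gap_integrable]) auto
      show "norm (closed_loop P1 x - closed_loop P2 x) \<le> data_bound * (weight x * gap x)"
        if "x \<in> {t<..<s}" for x
        using that ts by (intro closed_loop_diff_le) auto
    qed
    also have "\<dots> \<le> data_bound * tail_gap t"
      using weighted_gap_set_integral_le(2)[OF ts] data_bound_nonneg by (simp add: mult_left_mono)
    finally show ?thesis
      using ts(2) by (simp add: EEmat_eq_mexp_set_integral mult_left_mono mult.assoc)
  qed
  with data_bound_nonneg show ?thesis
    by (intro that[of "?N * exp (?l + 1) * data_bound"]) auto
qed

lemma norm_QQ_kernel_diff_le:
  "norm (QQ_kernel P1 t s - QQ_kernel P2 t s) \<le> norm (Gam M B S P1 s - Gam M B S P2 s)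
    * (2 * norm (St t s) + norm (Mt t s) * (norm (Gam M B S P1 s) + norm (Gam M B S P2 s)))"
proof -
  let ?\<Gamma>1 = "Gam M B S P1 s" and ?\<Gamma>2 = "Gam M B S P2 s"
  let ?x1 = "transpose (?\<Gamma>1 - ?\<Gamma>2) ** Mt t s ** ?\<Gamma>1"
    and ?x2 = "transpose ?\<Gamma>2 ** Mt t s ** (?\<Gamma>1 - ?\<Gamma>2)"
    and ?x3 = "transpose (?\<Gamma>1 - ?\<Gamma>2) ** St t s"
    and ?x4 = "transpose (St t s) ** (?\<Gamma>1 - ?\<Gamma>2)"
  have "QQ_kernel P1 t s - QQ_kernel P2 t s = ?x1 + ?x2 - ?x3 - ?x4"
    unfolding QQ_kernel_def by (simp add: transpose_diff matrix_mult_diff_left matrix_mult_diff_right)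
  then have "norm (QQ_kernel P1 t s - QQ_kernel P2 t s) \<le> norm ?x1 + norm ?x2 + norm ?x3 + norm ?x4"
    using norm_triangle_ineq4[of "?x1 + ?x2 - ?x3" ?x4] norm_triangle_ineq4[of "?x1 + ?x2" ?x3]
      norm_triangle_ineq[of ?x1 ?x2] by simp
  moreover have "norm (?\<Gamma>1 - ?\<Gamma>2) * (2 * norm (St t s) + norm (Mt t s) * (norm ?\<Gamma>1 + norm ?\<Gamma>2))
      = norm (?\<Gamma>1 - ?\<Gamma>2) * norm (Mt t s) * norm ?\<Gamma>1 + norm ?\<Gamma>2 * norm (Mt t s) * norm (?\<Gamma>1 - ?\<Gamma>2)
        + norm (?\<Gamma>1 - ?\<Gamma>2) * norm (St t s) + norm (St t s) * norm (?\<Gamma>1 - ?\<Gamma>2)"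
    by (simp add: algebra_simps)
  moreover have "norm ?x1 \<le> norm (?\<Gamma>1 - ?\<Gamma>2) * norm (Mt t s) * norm ?\<Gamma>1"
    "norm ?x2 \<le> norm ?\<Gamma>2 * norm (Mt t s) * norm (?\<Gamma>1 - ?\<Gamma>2)"
    by (rule norm_transpose_mult3_le)+
  moreover have "norm ?x3 \<le> norm (?\<Gamma>1 - ?\<Gamma>2) * norm (St t s)" "norm ?x4 \<le> norm (St t s) * norm (?\<Gamma>1 - ?\<Gamma>2)"
    by (simp_all add: norm_matrix_mult_le_bound norm_transpose)
  ultimately show ?thesis
    by linarith
qed

lemma QQ_kernel_diff_bound:
  obtains c where "0 \<le> c"
    "\<And>t s. t \<in> {0..T} \<Longrightarrow> s \<in> {0..T} \<Longrightarrow>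
      norm (QQ_kernel P1 t s - QQ_kernel P2 t s) \<le> c * (weight s * gap s)"
proof -
  obtain g1 where g1: "0 \<le> g1" "\<And>s. s \<in> {0..T} \<Longrightarrow> norm (Gam M B S P1 s) \<le> g1 * (1 + norm (B s))"
    using p1.Gam_bound by blast
  obtain g2 where g2: "0 \<le> g2" "\<And>s. s \<in> {0..T} \<Longrightarrow> norm (Gam M B S P2 s) \<le> g2 * (1 + norm (B s))"
    using p2.Gam_bound by blast
  let ?d = data_bound
  have "norm (QQ_kernel P1 t s - QQ_kernel P2 t s) \<le> (2 * ?d * ?d + ?d * ?d * (g1 + g2)) * (weight s * gap s)"
    if t: "t \<in> {0..T}" and s: "s \<in> {0..T}" for t s
  proof -
    let ?b = "norm (B s)"
    have factor: "2 * norm (St t s) + norm (Mt t s) * (norm (Gam M B S P1 s) + norm (Gam M B S P2 s))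
        \<le> 2 * ?d + ?d * ((g1 + g2) * (1 + ?b))"
      using data_bound(6,7)[OF t s] g1(2)[OF s] g2(2)[OF s] data_bound_nonneg
      by (intro add_mono mult_mono) (auto simp: algebra_simps)
    have "0 \<le> ?d * (?b * gap s)"
      using data_bound_nonneg by (simp add: gap_def)
    from order_trans[OF norm_QQ_kernel_diff_le mult_mono[OF Gam_diff_le[OF s] factor this]]
    have "norm (QQ_kernel P1 t s - QQ_kernel P2 t s) \<le> ?d * (?b * gap s) * (2 * ?d + ?d * ((g1 + g2) * (1 + ?b)))"
      by simp
    also have "\<dots> = ?d * 2 * ?d * (?b * gap s) + ?d * ?d * (g1 + g2) * (?b * (1 + ?b) * gap s)"
      by (simp add: algebra_simps)
    also have "\<dots> \<le> ?d * 2 * ?d * (weight s * gap s) + ?d * ?d * (g1 + g2) * (weight s * gap s)"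
      using data_bound_nonneg g1(1) g2(1) norm_B_le_weight[of s] norm_B_mult_le_weight[of s]
      by (intro add_mono mult_left_mono mult_right_mono) (auto simp: gap_def)
    finally show ?thesis
      by (simp add: algebra_simps)
  qed
  with g1(1) g2(1) data_bound_nonneg show ?thesis
    by (intro that[of "2 * ?d * ?d + ?d * ?d * (g1 + g2)"]) auto
qed

text \<open>Both \<open>QQ\<close> and a solution \<open>P\<close> have the form \<open>E(T,t)\<^sup>T K E(T,t) + \<integral>\<^sub>t\<^sup>T E(s,t)\<^sup>T Y(s) E(s,t) ds\<close>;
  this form depends Lipschitz-continuously on the tail of the gap.\<close>

lemma sandwich_representation_diff_le:
  fixes K :: "real^'n^'n" and Y1 Y2 :: "real \<Rightarrow> real^'n^'n"
  assumes t: "t \<in> {0..T}"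
    and E: "\<And>s. s \<in> {t..T} \<Longrightarrow> norm (EEmat A M B S P1 s t) \<le> e"
      "\<And>s. s \<in> {t..T} \<Longrightarrow> norm (EEmat A M B S P2 s t) \<le> e"
    and E_diff: "\<And>s. s \<in> {t..T} \<Longrightarrow> norm (EEmat A M B S P1 s t - EEmat A M B S P2 s t) \<le> cE * tail_gap t"
    and int1: "set_integrable lborel {t<..<T} (\<lambda>s. transpose (EEmat A M B S P1 s t) ** Y1 s ** EEmat A M B S P1 s t)"
    and int2: "set_integrable lborel {t<..<T} (\<lambda>s. transpose (EEmat A M B S P2 s t) ** Y2 s ** EEmat A M B S P2 s t)"
    and Y: "\<And>s. s \<in> {t<..<T} \<Longrightarrow> norm (Y1 s) \<le> c * weight s" "\<And>s. s \<in> {t<..<T} \<Longrightarrow> norm (Y2 s) \<le> c * weight s"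
    and Y_diff: "\<And>s. s \<in> {t<..<T} \<Longrightarrow>
      norm (Y1 s - Y2 s) \<le> a * tail_gap t * weight s + b * (weight s * gap s)"
    and K: "norm K \<le> k"
    and nonneg: "0 \<le> e" "0 \<le> c" "0 \<le> cE" "0 \<le> a"
  shows "norm ((transpose (EEmat A M B S P1 T t) ** K ** EEmat A M B S P1 T t
        + (LINT s:{t<..<T}|lborel. transpose (EEmat A M B S P1 s t) ** Y1 s ** EEmat A M B S P1 s t))
      - (transpose (EEmat A M B S P2 T t) ** K ** EEmat A M B S P2 T t
        + (LINT s:{t<..<T}|lborel. transpose (EEmat A M B S P2 s t) ** Y2 s ** EEmat A M B S P2 s t)))
    \<le> (2 * e * k * cE + (2 * e * c * cE + e * a * e) * (LINT u:{0<..<T}|lborel. weight u) + e * b * e)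
      * tail_gap t"
proof -
  let ?\<delta> = "cE * tail_gap t" and ?D = "tail_gap t" and ?W = "LINT u:{0<..<T}|lborel. weight u"
  let ?A = "\<lambda>P. transpose (EEmat A M B S P T t) ** K ** EEmat A M B S P T t"
  let ?I = "\<lambda>P Y. LINT s:{t<..<T}|lborel. transpose (EEmat A M B S P s t) ** Y s ** EEmat A M B S P s t"
  have T: "T \<in> {t..T}"
    using t by simp
  have "norm (?A P1 - ?A P2) \<le> 2 * e * k * ?\<delta> + e * 0 * e"
    using E[OF T] E_diff[OF T] K by (intro norm_sandwich_diff_le_bound) auto
  then have terminal: "norm (?A P1 - ?A P2) \<le> 2 * e * k * ?\<delta>"
    by simp
  have "norm (?I P1 Y1 - ?I P2 Y2)
      \<le> (2 * e * c * ?\<delta> + e * (a * ?D) * e) * (LINT s:{t<..<T}|lborel. weight s)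
        + e * b * e * (LINT s:{t<..<T}|lborel. weight s * gap s)"
  proof (rule norm_set_integral_sandwich_diff_le[OF int1 int2])
    show "set_integrable lborel {t<..<T} weight"
      using t by (intro set_integrable_subset[OF weight_integrable]) auto
    show "set_integrable lborel {t<..<T} (\<lambda>s. weight s * gap s)"
      using t by (intro set_integrable_subset[OF weighted_gap_integrable]) auto
  qed (use E E_diff Y Y_diff in auto)
  also have "\<dots> \<le> (2 * e * c * ?\<delta> + e * (a * ?D) * e) * ?W + e * b * e * ?D"
    using t nonneg tail_gap_nonneg[of t]
    by (simp add: tail_gap_def mult_left_mono weight_set_integral_le)
  finally have integral: "norm (?I P1 Y1 - ?I P2 Y2) \<le> (2 * e * c * ?\<delta> + e * (a * ?D) * e) * ?W + e * b * e * ?D" .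
  have "norm ((?A P1 + ?I P1 Y1) - (?A P2 + ?I P2 Y2)) \<le> norm (?A P1 - ?A P2) + norm (?I P1 Y1 - ?I P2 Y2)"
    by (rule norm_diff_triangle_ineq)
  with terminal integral show ?thesis
    by (simp add: algebra_simps)
qed

lemma QQ_diff_bound:
  obtains c where "0 \<le> c"
    "\<And>t. t \<in> {0..T} \<Longrightarrow> norm (QQ T A M B S Gd Qt St Mt P1 t - QQ T A M B S Gd Qt St Mt P2 t) \<le> c * tail_gap t"
proof -
  obtain e1 where e1: "0 \<le> e1" "\<And>s t. s \<in> {0..T} \<Longrightarrow> t \<in> {0..T} \<Longrightarrow> norm (EEmat A M B S P1 s t) \<le> e1"
    using p1.EEmat_bound by blast
  obtain e2 where e2: "0 \<le> e2" "\<And>s t. s \<in> {0..T} \<Longrightarrow> t \<in> {0..T} \<Longrightarrow> norm (EEmat A M B S P2 s t) \<le> e2"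
    using p2.EEmat_bound by blast
  obtain cE where cE: "0 \<le> cE" "\<And>t s. 0 \<le> t \<Longrightarrow> t \<le> s \<Longrightarrow> s \<le> T \<Longrightarrow>
      norm (EEmat A M B S P1 s t - EEmat A M B S P2 s t) \<le> cE * tail_gap t"
    using EEmat_diff_bound by blast
  obtain k1 where k1: "0 \<le> k1" "\<And>t s. t \<in> {0..T} \<Longrightarrow> s \<in> {0..T} \<Longrightarrow> norm (QQ_kernel P1 t s) \<le> k1 * weight s"
    using p1.QQ_kernel_bound by blast
  obtain k2 where k2: "0 \<le> k2" "\<And>t s. t \<in> {0..T} \<Longrightarrow> s \<in> {0..T} \<Longrightarrow> norm (QQ_kernel P2 t s) \<le> k2 * weight s"
    using p2.QQ_kernel_bound by blast
  obtain k' where k': "0 \<le> k'" "\<And>t s. t \<in> {0..T} \<Longrightarrow> s \<in> {0..T} \<Longrightarrow>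
      norm (QQ_kernel P1 t s - QQ_kernel P2 t s) \<le> k' * (weight s * gap s)"
    using QQ_kernel_diff_bound by blast
  let ?e = "max e1 e2" and ?k = "max k1 k2" and ?d = data_bound and ?W = "LINT u:{0<..<T}|lborel. weight u"
  let ?c = "2 * ?e * ?d * cE + (2 * ?e * ?k * cE + ?e * 0 * ?e) * ?W + ?e * k' * ?e"
  have "norm (QQ T A M B S Gd Qt St Mt P1 t - QQ T A M B S Gd Qt St Mt P2 t) \<le> ?c * tail_gap t"
    if t: "t \<in> {0..T}" for t
    unfolding QQ_eq_set_integral[OF t]
  proof (rule sandwich_representation_diff_le[OF t])
    show "norm (EEmat A M B S P1 s t) \<le> ?e" "norm (EEmat A M B S P2 s t) \<le> ?e" if "s \<in> {t..T}" for s
      using e1(2)[of s t] e2(2)[of s t] that t by (auto simp: le_max_iff_disj)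
    show "norm (QQ_kernel P1 t s) \<le> ?k * weight s" "norm (QQ_kernel P2 t s) \<le> ?k * weight s"
      if "s \<in> {t<..<T}" for s
      using k1(2)[of t s] k2(2)[of t s] that t
        mult_right_mono[OF max.cobounded1[of k1 k2] weight_nonneg[of s]]
        mult_right_mono[OF max.cobounded2[of k2 k1] weight_nonneg[of s]] by auto
  qed (use t e1 e2 cE k1 k2 k' data_bound(4)[of t t] in
    \<open>auto intro: p1.QQ_integrand_integrable p2.QQ_integrand_integrable simp: le_max_iff_disj\<close>)
  with cE(1) e1(1) k1(1) k'(1) data_bound_nonneg weight_set_integral_nonneg show ?thesis
    by (intro that[of ?c]) auto
qed

lemma riccati_source_diff_bound:
  obtains c where "0 \<le> c"
    "\<And>t. t \<in> {0..T} \<Longrightarrow>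
      norm (riccati_source P1 t - riccati_source P2 t) \<le> c * tail_gap t + c * (weight t * gap t)"
proof -
  obtain q where q: "0 \<le> q" "\<And>t. t \<in> {0..T} \<Longrightarrow>
      norm (QQ T A M B S Gd Qt St Mt P1 t - QQ T A M B S Gd Qt St Mt P2 t) \<le> q * tail_gap t"
    using QQ_diff_bound by blast
  obtain p1 where p1: "0 \<le> p1" "\<And>t. t \<in> {0..T} \<Longrightarrow> norm (P1 t) \<le> p1"
    using p1.P_bound by blast
  obtain p2 where p2: "0 \<le> p2" "\<And>t. t \<in> {0..T} \<Longrightarrow> norm (P2 t) \<le> p2"
    using p2.P_bound by blast
  let ?d = data_bound
  let ?c = "q + ?d * (p1 + p2)"
  have "norm (riccati_source P1 t - riccati_source P2 t) \<le> ?c * tail_gap t + ?c * (weight t * gap t)"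
    if t: "t \<in> {0..T}" for t
  proof -
    let ?Z = "\<lambda>X Y. X ** B t ** matrix_inv (M t t) ** transpose (B t) ** Y"
    let ?\<Delta> = "QQ T A M B S Gd Qt St Mt P2 t - QQ T A M B S Gd Qt St Mt P1 t"
    let ?b = "norm (B t)"
    have eq: "riccati_source P1 t - riccati_source P2 t = ?\<Delta> + (?Z (P1 t - P2 t) (P1 t) + ?Z (P2 t) (P1 t - P2 t))"
      unfolding riccati_source_def by (simp add: matrix_mult_diff_left matrix_mult_diff_right)
    have "norm (riccati_source P1 t - riccati_source P2 t)
        \<le> norm ?\<Delta> + (norm (?Z (P1 t - P2 t) (P1 t)) + norm (?Z (P2 t) (P1 t - P2 t)))"
      unfolding eq using norm_triangle_ineq[of ?\<Delta> "?Z (P1 t - P2 t) (P1 t) + ?Z (P2 t) (P1 t - P2 t)"]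
        norm_triangle_ineq[of "?Z (P1 t - P2 t) (P1 t)" "?Z (P2 t) (P1 t - P2 t)"] by linarith
    also have "\<dots> \<le> q * tail_gap t + (gap t * ?b * ?d * ?b * p1 + p2 * ?b * ?d * ?b * gap t)"
      using q(2)[OF t] data_bound(1)[OF t t] p1(2)[OF t] p2(2)[OF t]
      by (intro add_mono norm_matrix_mult_le_bound) (auto simp: gap_def norm_transpose norm_minus_commute)
    also have "\<dots> = q * tail_gap t + ?d * (p1 + p2) * gap t * (?b * ?b)"
      by (simp add: algebra_simps)
    also have "\<dots> \<le> q * tail_gap t + ?d * (p1 + p2) * gap t * weight t"
      using data_bound_nonneg p1(1) p2(1)
      by (intro add_left_mono mult_left_mono) (auto simp: gap_def weight_def power2_eq_square mult_mono)
    also have "\<dots> \<le> ?c * tail_gap t + ?c * (weight t * gap t)"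
    proof (rule add_mono)
      show "q * tail_gap t \<le> ?c * tail_gap t"
        using p1(1) p2(1) data_bound_nonneg tail_gap_nonneg[of t] by (intro mult_right_mono) auto
      have "?d * (p1 + p2) \<le> ?c"
        using q(1) by simp
      from mult_right_mono[OF this weighted_gap_nonneg[of t]]
      show "?d * (p1 + p2) * gap t * weight t \<le> ?c * (weight t * gap t)"
        by (simp add: mult_ac)
    qed
    finally show ?thesis .
  qed
  with q(1) p1(1) p2(1) data_bound_nonneg show ?thesis
    by (intro that[of ?c]) auto
qed

lemma gap_le_tail_gap:
  assumes sol1: "riccati_solution T A B Q S M G Gd Qt St Mt P1"
    and sol2: "riccati_solution T A B Q S M G Gd Qt St Mt P2"
  obtains C where "\<And>t. t \<in> {0..T} \<Longrightarrow> gap t \<le> C * tail_gap t"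
proof -
  obtain e1 where e1: "0 \<le> e1" "\<And>s t. s \<in> {0..T} \<Longrightarrow> t \<in> {0..T} \<Longrightarrow> norm (EEmat A M B S P1 s t) \<le> e1"
    using p1.EEmat_bound by blast
  obtain e2 where e2: "0 \<le> e2" "\<And>s t. s \<in> {0..T} \<Longrightarrow> t \<in> {0..T} \<Longrightarrow> norm (EEmat A M B S P2 s t) \<le> e2"
    using p2.EEmat_bound by blast
  obtain cE where cE: "0 \<le> cE" "\<And>t s. 0 \<le> t \<Longrightarrow> t \<le> s \<Longrightarrow> s \<le> T \<Longrightarrow>
      norm (EEmat A M B S P1 s t - EEmat A M B S P2 s t) \<le> cE * tail_gap t"
    using EEmat_diff_bound by blast
  obtain r1 where r1: "0 \<le> r1" "\<And>t. t \<in> {0..T} \<Longrightarrow> norm (riccati_source P1 t) \<le> r1 * weight t"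
    using p1.riccati_source_bound by blast
  obtain r2 where r2: "0 \<le> r2" "\<And>t. t \<in> {0..T} \<Longrightarrow> norm (riccati_source P2 t) \<le> r2 * weight t"
    using p2.riccati_source_bound by blast
  obtain r' where r': "0 \<le> r'" "\<And>t. t \<in> {0..T} \<Longrightarrow>
      norm (riccati_source P1 t - riccati_source P2 t) \<le> r' * tail_gap t + r' * (weight t * gap t)"
    using riccati_source_diff_bound by blast
  let ?e = "max e1 e2" and ?r = "max r1 r2" and ?W = "LINT u:{0<..<T}|lborel. weight u"
  let ?C = "2 * ?e * norm (G T) * cE + (2 * ?e * ?r * cE + ?e * r' * ?e) * ?W + ?e * r' * ?e"
  have "gap t \<le> ?C * tail_gap t" if t: "t \<in> {0..T}" for t
    unfolding gap_def
    unfolding riccati_solution_eq_set_integral[OF sol1 t] riccati_solution_eq_set_integral[OF sol2 t]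
  proof (rule sandwich_representation_diff_le[OF t])
    show "norm (EEmat A M B S P1 s t) \<le> ?e" "norm (EEmat A M B S P2 s t) \<le> ?e" if "s \<in> {t..T}" for s
      using e1(2)[of s t] e2(2)[of s t] that t by (auto simp: le_max_iff_disj)
    show "norm (riccati_source P1 s) \<le> ?r * weight s" "norm (riccati_source P2 s) \<le> ?r * weight s"
      if "s \<in> {t<..<T}" for s
      using r1(2)[of s] r2(2)[of s] that t
        mult_right_mono[OF max.cobounded1[of r1 r2] weight_nonneg[of s]]
        mult_right_mono[OF max.cobounded2[of r2 r1] weight_nonneg[of s]] by auto
    show "norm (riccati_source P1 s - riccati_source P2 s) \<le> r' * tail_gap t * weight s + r' * (weight s * gap s)"
      if s: "s \<in> {t<..<T}" for s
    proof -
      have "tail_gap s \<le> tail_gap t"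
        unfolding tail_gap_def[of s] using weighted_gap_set_integral_le(1)[of t s] s t by simp
      also have "\<dots> \<le> tail_gap t * weight s"
        using mult_left_mono[OF weight_ge_one[of s] tail_gap_nonneg[of t]] by simp
      finally have "tail_gap s \<le> tail_gap t * weight s" .
      with r'(1) have "r' * tail_gap s \<le> r' * tail_gap t * weight s"
        by (simp add: mult_left_mono mult.assoc)
      with r'(2)[of s] s t show ?thesis
        by simp
    qed
  qed (use t e1 e2 cE r1 r' in \<open>auto intro: p1.riccati_integrand_integrable p2.riccati_integrand_integrable
      simp: le_max_iff_disj\<close>)
  then show ?thesis
    by (rule that)
qed

lemma riccati_solution_unique:
  assumes "riccati_solution T A B Q S M G Gd Qt St Mt P1" "riccati_solution T A B Q S M G Gd Qt St Mt P2"
    and "t \<in> {0..T}"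
  shows "P1 t = P2 t"
proof -
  obtain C where C: "\<And>t. t \<in> {0..T} \<Longrightarrow> gap t \<le> C * tail_gap t"
    using gap_le_tail_gap[OF assms(1,2)] by blast
  have "gap t = 0"
    using gap_cont weight_nonneg weight_integrable weighted_gap_integrable C assms(3)
    by (intro backward_gronwall[where w = weight and C = C]) (auto simp: gap_def tail_gap_def)
  then show ?thesis
    by (simp add: gap_def)
qed

end

theorem proposition4p1:
  fixes T :: real
    and A :: "real \<Rightarrow> real^'n^'n" and B :: "real \<Rightarrow> real^'m^'n"
    and M Mt :: "real \<Rightarrow> real \<Rightarrow> real^'m^'m"
    and Q Qt :: "real \<Rightarrow> real \<Rightarrow> real^'n^'n"
    and S St :: "real \<Rightarrow> real \<Rightarrow> real^'n^'m"
    and G Gd :: "real \<Rightarrow> real^'n^'n"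
    and P1 P2 :: "real \<Rightarrow> real^'n^'n"
  assumes T_pos: "T > 0"
    and A_L1: "set_integrable lborel {0<..<T} A"
    and B_meas: "set_borel_measurable lborel {0<..<T} B"
    and B_L2: "set_integrable lborel {0<..<T} (\<lambda>t. (norm (B t))\<^sup>2)"
    and M_cont: "continuous_on ({0..T} \<times> {0..T}) (\<lambda>(t, s). M t s)"
    and M_pd: "\<And>t s. t \<in> {0..T} \<Longrightarrow> s \<in> {0..T} \<Longrightarrow> pos_def (M t s)"
    and Q_cont: "continuous_on ({0..T} \<times> {0..T}) (\<lambda>(t, s). Q t s)"
    and Q_psd: "\<And>t s. t \<in> {0..T} \<Longrightarrow> s \<in> {0..T} \<Longrightarrow> pos_semidef (Q t s)"
    and S_cont: "continuous_on ({0..T} \<times> {0..T}) (\<lambda>(t, s). S t s)"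
    and G_psd: "\<And>t. t \<in> {0..T} \<Longrightarrow> pos_semidef (G t)"
    and G_deriv: "\<And>t. t \<in> {0..T} \<Longrightarrow> (G has_vector_derivative Gd t) (at t within {0..T})"
    and Gd_cont: "continuous_on {0..T} Gd"
    and Q_deriv: "\<And>t s. t \<in> {0..T} \<Longrightarrow> s \<in> {0..T} \<Longrightarrow>
                   ((\<lambda>r. Q r s) has_vector_derivative Qt t s) (at t within {0..T})"
    and Qt_cont: "continuous_on ({0..T} \<times> {0..T}) (\<lambda>(t, s). Qt t s)"
    and S_deriv: "\<And>t s. t \<in> {0..T} \<Longrightarrow> s \<in> {0..T} \<Longrightarrow>
                   ((\<lambda>r. S r s) has_vector_derivative St t s) (at t within {0..T})"
    and St_cont: "continuous_on ({0..T} \<times> {0..T}) (\<lambda>(t, s). St t s)"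
    and M_deriv: "\<And>t s. t \<in> {0..T} \<Longrightarrow> s \<in> {0..T} \<Longrightarrow>
                   ((\<lambda>r. M r s) has_vector_derivative Mt t s) (at t within {0..T})"
    and Mt_cont: "continuous_on ({0..T} \<times> {0..T}) (\<lambda>(t, s). Mt t s)"
    and P1_sol: "riccati_solution T A B Q S M G Gd Qt St Mt P1"
    and P2_sol: "riccati_solution T A B Q S M G Gd Qt St Mt P2"
  shows "\<forall>t\<in>{0..T}. P1 t = P2 t"
proof -
  interpret riccati_pair T A B Q S M G Gd Qt St Mt P1 P2
    using T_pos A_L1 B_meas B_L2 M_cont M_pd Q_cont S_cont Gd_cont Qt_cont St_cont Mt_cont P1_sol P2_sol
    by unfold_locales (auto simp: riccati_solution_def)
  show ?thesis
    using P1_sol P2_sol by (auto intro: riccati_solution_unique)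
qed

end
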